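(* Let $\mu,\phi$ satisfy $\phi''(x) = 1 - \int_{\mathbb{R}} \mu(\tfrac12 v^2 + \phi(x))\,dv$ and assumptions (i)–(iv) below, and let $q(x) = \int_{\mathbb{R}} \mu'(\tfrac12 v^2 + \phi(x))\,dv$. Then $u=\phi'$ is an eigenfunction with eigenvalue $0$ of the Dirichlet Sturm–Liouville problem $u''+(q+\lambda)u=0$, $u(0)=u(P_\phi)=0$, and it is the second eigenfunction. Consequently the smallest eigenvalue $\lambda_0$ of this problem satisfies $\lambda_0<0$, and its first eigenfunction $u_0$ satisfies $u_0(x) = u_0(P_\phi - x)$ and $u_0'(P_\phi-x) = -u_0'(x)$ for all $x\in[0,P_\phi]$; in particular $\psi = u_0u_0'$ satisfies $\psi(P_\phi - x) = -\psi(x)$.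
   Context: Assumptions: (i) $\mu\in C^1(\mathbb{R})$ is nonnegative; (ii) $\int_{\mathbb{R}} \mu(\tfrac12 v^2)\,dv = 1$; (iii) there are $\gamma>1$, $C>0$ with $|\mu'(y)| \le C/(1+|y|^\gamma)$ for all $y$; (iv) $\phi$ is nonconstant with minimal period $P_\phi$, and, writing $\phi_+ = \max\phi$, $\phi_- = \min\phi$, it is normalized so that $\phi(0)=\phi(P_\phi)=\phi_+$, $\phi(P_\phi/2) = \phi_-$, $\phi(x) = \phi(P_\phi - x)$ for all $x\in[0,P_\phi]$, and $\phi$ is strictly decreasing on $[0,P_\phi/2]$ (and strictly increasing on $[P_\phi/2,P_\phi]$ by symmetry). *)

theory Defs
  imports "HOL-Analysis.Analysis"
begin

definition sl_dirichlet_eigenfunction ::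
  "(real \<Rightarrow> real) \<Rightarrow> real \<Rightarrow> real \<Rightarrow> (real \<Rightarrow> real) \<Rightarrow> bool" where
  "sl_dirichlet_eigenfunction q L lam u \<longleftrightarrow>
     (\<exists>u' u''. \<forall>x\<in>{0..L}.
        (u has_real_derivative u' x) (at x within {0..L}) \<and>
        (u' has_real_derivative u'' x) (at x within {0..L}) \<and>
        u'' x + (q x + lam) * u x = 0) \<and>
     u 0 = 0 \<and> u L = 0 \<and> (\<exists>x\<in>{0..L}. u x \<noteq> 0)"

definition sl_dirichlet_eigenvalue :: "(real \<Rightarrow> real) \<Rightarrow> real \<Rightarrow> real \<Rightarrow> bool" where
  "sl_dirichlet_eigenvalue q L lam \<longleftrightarrow> (\<exists>u. sl_dirichlet_eigenfunction q L lam u)"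

end

theory Submission
  imports Defs "HOL-Probability.Sinc_Integral"
begin

text \<open>Differentiating the field equation shows that \<open>u = \<phi>'\<close> solves \<open>u'' + q u = 0\<close> with
  \<open>u 0 = u P = 0\<close>. Since \<open>\<phi>\<close> decreases strictly on \<open>[0, P/2]\<close> and increases on \<open>[P/2, P]\<close>, and a
  further critical point would be a double zero of \<open>\<phi>'\<close>, the only interior node of \<open>\<phi>'\<close> is \<open>P/2\<close>.
  The principal eigenvalue is found by shooting: it is the supremum of the \<open>\<lambda>\<close> for which the solution
  with \<open>u 0 = 0\<close>, \<open>u' 0 = 1\<close> stays positive on \<open>(0, P]\<close>. Sturm comparison with \<open>\<phi>'\<close> shows that an
  eigenfunction for a negative eigenvalue has no interior node (each nodal interval would contain
  \<open>P/2\<close>), and comparison with the principal eigenfunction then shows that the principal eigenvalue is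
  the only negative one. Eigenspaces are one-dimensional and \<open>q\<close> is symmetric about \<open>P/2\<close>, so the
  principal eigenfunction is symmetric and its derivative antisymmetric.\<close>

section \<open>Solutions of \<open>u'' + g u = 0\<close> on a compact interval\<close>

definition ode_sol :: "(real \<Rightarrow> real) \<Rightarrow> real \<Rightarrow> (real \<Rightarrow> real) \<Rightarrow> (real \<Rightarrow> real) \<Rightarrow> bool" where
  "ode_sol g L u u' \<longleftrightarrow> (\<forall>x\<in>{0..L}. (u has_real_derivative u' x) (at x within {0..L})
          \<and> (u' has_real_derivative (- g x * u x)) (at x within {0..L}))"

lemma ode_solD:
  assumes "ode_sol g L u u'" "x \<in> {0..L}"
  shows "(u has_real_derivative u' x) (at x within {0..L})"
    and "(u' has_real_derivative (- g x * u x)) (at x within {0..L})"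
  using assms by (auto simp: ode_sol_def)

lemma ode_sol_continuous:
  assumes "ode_sol g L u u'"
  shows "continuous_on {0..L} u" "continuous_on {0..L} u'"
  using assms unfolding ode_sol_def by (auto intro!: DERIV_continuous_on)

lemma ode_sol_lincomb:
  assumes "ode_sol g L u u'" and "ode_sol g L v v'"
  shows "ode_sol g L (\<lambda>x. a * u x + b * v x) (\<lambda>x. a * u' x + b * v' x)"
  unfolding ode_sol_def
proof
  fix x assume x: "x \<in> {0..L}"
  note d = ode_solD[OF assms(1) x] ode_solD[OF assms(2) x]
  show "((\<lambda>x. a * u x + b * v x) has_real_derivative a * u' x + b * v' x) (at x within {0..L}) \<and>
        ((\<lambda>x. a * u' x + b * v' x) has_real_derivative - g x * (a * u x + b * v x)) (at x within {0..L})"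
    by (intro conjI DERIV_add DERIV_cmult d DERIV_cong[OF DERIV_add[OF DERIV_cmult[OF d(2)] DERIV_cmult[OF d(4)]]])
       (simp add: algebra_simps)
qed

lemma ode_sol_scale:
  assumes "ode_sol g L u u'"
  shows "ode_sol g L (\<lambda>x. c * u x) (\<lambda>x. c * u' x)"
  using ode_sol_lincomb[OF assms assms, of c 0] by simp

lemma eigenfunction_iff_ode_sol:
  "sl_dirichlet_eigenfunction q L lam u \<longleftrightarrow>
     (\<exists>u'. ode_sol (\<lambda>x. q x + lam) L u u') \<and> u 0 = 0 \<and> u L = 0 \<and> (\<exists>x\<in>{0..L}. u x \<noteq> 0)"
proof -
  have eq: "u'' x + (q x + lam) * u x = 0 \<longleftrightarrow> u'' x = - (q x + lam) * u x" for u'' :: "real \<Rightarrow> real" and x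
    by (simp only: mult_minus_left eq_neg_iff_add_eq_0)
  have "(\<exists>u' u''. \<forall>x\<in>{0..L}. (u has_real_derivative u' x) (at x within {0..L}) \<and>
           (u' has_real_derivative u'' x) (at x within {0..L}) \<and> u'' x = - (q x + lam) * u x)
        \<longleftrightarrow> (\<exists>u'. ode_sol (\<lambda>x. q x + lam) L u u')" (is "?lhs \<longleftrightarrow> _")
  proof
    assume ?lhs
    then obtain u' u'' where "\<forall>x\<in>{0..L}. (u has_real_derivative u' x) (at x within {0..L}) \<and>
           (u' has_real_derivative u'' x) (at x within {0..L}) \<and> u'' x = - (q x + lam) * u x"
      by blast
    then have "ode_sol (\<lambda>x. q x + lam) L u u'"
      unfolding ode_sol_def by (metis (no_types, lifting))
    then show "\<exists>u'. ode_sol (\<lambda>x. q x + lam) L u u'" by blast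
  next
    assume "\<exists>u'. ode_sol (\<lambda>x. q x + lam) L u u'"
    then obtain u' where "ode_sol (\<lambda>x. q x + lam) L u u'" ..
    then show ?lhs
      unfolding ode_sol_def by (intro exI[of _ u'] exI[of _ "\<lambda>x. - (q x + lam) * u x"]) simp
  qed
  then show ?thesis unfolding sl_dirichlet_eigenfunction_def eq by blast
qed

lemma has_integral_scaled_power:
  fixes s c :: real
  assumes "0 \<le> s"
  shows "((\<lambda>t. c * t ^ n) has_integral (c * s ^ Suc n / Suc n)) {0..s}"
proof -
  have "((\<lambda>t. c * t ^ n) has_integral (c * s ^ Suc n / Suc n - c * 0 ^ Suc n / Suc n)) {0..s}"
  proof (rule fundamental_theorem_of_calculus[OF assms])
    fix x assume "x \<in> {0..s}"
    have "((\<lambda>t. c * t ^ Suc n / Suc n) has_real_derivative c * (Suc n * x ^ n) / Suc n) (at x within {0..s})"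
      using DERIV_pow[of "Suc n" x] by (intro DERIV_cdivide DERIV_cmult) simp
    then show "((\<lambda>t. c * t ^ Suc n / Suc n) has_vector_derivative c * x ^ n) (at x within {0..s})"
      by (simp add: has_real_derivative_iff_has_vector_derivative[symmetric])
  qed
  then show ?thesis by simp
qed

lemma integral_bound_by_power:
  fixes f :: "real \<Rightarrow> real"
  assumes "continuous_on {0..x} f" "0 \<le> x" "\<And>t. t \<in> {0..x} \<Longrightarrow> \<bar>f t\<bar> \<le> c * t ^ n"
  shows "\<bar>integral {0..x} f\<bar> \<le> c * x ^ Suc n / Suc n"
proof -
  note pow = has_integral_scaled_power[OF assms(2), of c n]
  have "norm (integral {0..x} f) \<le> integral {0..x} (\<lambda>t. c * t ^ n)"
    using assms(3)
    by (intro integral_norm_bound_integral integrable_continuous_real[OF assms(1)] has_integral_integrable[OF pow]) auto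
  also have "\<dots> = c * x ^ Suc n / Suc n"
    using pow by (rule integral_unique)
  finally show ?thesis by simp
qed

lemma indefinite_integral_has_real_derivative:
  fixes h :: "real \<Rightarrow> real"
  assumes "continuous_on {0..L} h" "x \<in> {0..L}"
  shows "((\<lambda>y. integral {0..y} h) has_real_derivative h x) (at x within {0..L})"
  using assms by (simp add: has_real_derivative_iff_has_vector_derivative integral_has_vector_derivative)

lemma continuous_on_indefinite_integral:
  fixes h :: "real \<Rightarrow> real"
  assumes "continuous_on {0..L} h"
  shows "continuous_on {0..L} (\<lambda>x. integral {0..x} h)"
  by (intro indefinite_integral_continuous_1 integrable_continuous_real assms)

text \<open>The Picard iterates for \<open>y x = x - \<integral>\<^sub>0\<^sup>x \<integral>\<^sub>0\<^sup>s g t y t dt ds\<close>, i.e. for the solution with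
  \<open>y 0 = 0\<close>, \<open>y' 0 = 1\<close>; the series \<open>\<Sum>n. picard g n\<close> is that solution.\<close>

primrec picard :: "(real \<Rightarrow> real) \<Rightarrow> nat \<Rightarrow> real \<Rightarrow> real" where
  "picard g 0 = (\<lambda>x. x)"
| "picard g (Suc n) = (\<lambda>x. - integral {0..x} (\<lambda>s. integral {0..s} (\<lambda>t. g t * picard g n t)))"

definition picard_rhs :: "(real \<Rightarrow> real) \<Rightarrow> nat \<Rightarrow> real \<Rightarrow> real" where
  "picard_rhs g n s = integral {0..s} (\<lambda>t. g t * picard g n t)"

lemma picard_Suc: "picard g (Suc n) x = - integral {0..x} (picard_rhs g n)"
  by (simp add: picard_rhs_def[abs_def])

lemma picard_at_0 [simp]: "picard g n 0 = 0" and picard_rhs_at_0 [simp]: "picard_rhs g n 0 = 0"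
  by (cases n) (auto simp: picard_rhs_def)

lemma picard_continuous:
  assumes "continuous_on {0..L} g"
  shows "continuous_on {0..L} (picard g n) \<and> continuous_on {0..L} (picard_rhs g n)"
proof (induction n)
  case 0
  have "continuous_on {0..L} (picard g 0)" by (simp add: continuous_on_id)
  then show ?case
    unfolding picard_rhs_def[abs_def] by (intro conjI continuous_on_indefinite_integral continuous_intros assms)
next
  case (Suc n)
  have "continuous_on {0..L} (picard g (Suc n))"
    unfolding picard_Suc[abs_def] by (intro continuous_intros continuous_on_indefinite_integral Suc[THEN conjunct2])
  then show ?case
    unfolding picard_rhs_def[abs_def] by (intro conjI continuous_on_indefinite_integral continuous_intros assms)
qed

lemma picard_rhs_bound:
  assumes g: "continuous_on {0..L} g" and M: "\<And>x. x \<in> {0..L} \<Longrightarrow> \<bar>g x\<bar> \<le> M" and "0 \<le> M"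
    and IH: "\<And>t. t \<in> {0..L} \<Longrightarrow> \<bar>picard g n t\<bar> \<le> L * (M*L)^n * t^n / fact n"
    and x: "x \<in> {0..L}"
  shows "\<bar>picard_rhs g n x\<bar> \<le> (M*L) ^ Suc n * x ^ Suc n / fact (Suc n)"
proof -
  have "continuous_on {0..x} (\<lambda>t. g t * picard g n t)"
    by (rule continuous_on_subset[of "{0..L}"]) (use x picard_continuous[OF g] in \<open>auto intro!: continuous_intros g\<close>)
  then have "\<bar>picard_rhs g n x\<bar> \<le> ((M*L) ^ Suc n / fact n) * x ^ Suc n / Suc n"
    unfolding picard_rhs_def
  proof (rule integral_bound_by_power)
    fix t assume "t \<in> {0..x}"
    then have t: "t \<in> {0..L}" using x by auto
    have "\<bar>g t * picard g n t\<bar> \<le> M * (L * (M*L)^n * t^n / fact n)"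
      unfolding abs_mult using IH[OF t] M[OF t] \<open>0 \<le> M\<close> by (intro mult_mono) auto
    then show "\<bar>g t * picard g n t\<bar> \<le> (M*L) ^ Suc n / fact n * t ^ n"
      by (simp add: field_simps)
  qed (use x in auto)
  also have "\<dots> = (M*L) ^ Suc n * x ^ Suc n / fact (Suc n)"
    by (simp add: field_simps)
  finally show ?thesis .
qed

lemma picard_bound:
  assumes g: "continuous_on {0..L} g" and M: "\<And>x. x \<in> {0..L} \<Longrightarrow> \<bar>g x\<bar> \<le> M" and M0: "0 \<le> M"
  shows "x \<in> {0..L} \<Longrightarrow> \<bar>picard g n x\<bar> \<le> L * (M*L)^n * x^n / fact n"
proof (induction n arbitrary: x)
  case 0
  then show ?case by simp
next
  case (Suc n)
  have "continuous_on {0..x} (picard_rhs g n)"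
    by (rule continuous_on_subset[of "{0..L}"]) (use Suc.prems picard_continuous[OF g] in auto)
  then have "\<bar>picard g (Suc n) x\<bar> \<le> ((M*L) ^ Suc n / fact (Suc n)) * x ^ Suc (Suc n) / Suc (Suc n)"
    unfolding picard_Suc abs_minus_cancel
  proof (rule integral_bound_by_power)
    fix t assume "t \<in> {0..x}"
    then have "t \<in> {0..L}" using Suc.prems by auto
    then show "\<bar>picard_rhs g n t\<bar> \<le> (M*L) ^ Suc n / fact (Suc n) * t ^ Suc n"
      using picard_rhs_bound[OF g M M0 Suc.IH] by auto
  qed (use Suc.prems in auto)
  also have "\<dots> \<le> ((M*L) ^ Suc n / fact (Suc n)) * x ^ Suc (Suc n)"
    using Suc.prems M0 by (intro divide_left_mono[of 1, simplified]) auto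
  also have "\<dots> = ((M*L) ^ Suc n / fact (Suc n) * x ^ Suc n) * x" by simp
  also have "\<dots> \<le> ((M*L) ^ Suc n / fact (Suc n) * x ^ Suc n) * L"
    using Suc.prems M0 by (intro mult_left_mono) auto
  finally show ?case by (simp add: mult_ac)
qed

lemma uniform_limit_integral_tendsto:
  fixes F :: "nat \<Rightarrow> real \<Rightarrow> real"
  assumes "uniform_limit {0..L} F G sequentially" "\<And>n. continuous_on {0..L} (F n)" "x \<in> {0..L}"
  shows "(\<lambda>n. integral {0..x} (F n)) \<longlonglongrightarrow> integral {0..x} G"
proof -
  have sub: "{0..x} \<subseteq> {0..L}" using assms(3) by auto
  obtain I J where "\<And>n. (F n has_integral I n) {0..x}" "(G has_integral J) {0..x}" "I \<longlonglongrightarrow> J"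
    using uniform_limit_integral[OF uniform_limit_on_subset[OF assms(1) sub] continuous_on_subset[OF assms(2) sub]]
    by auto
  then show ?thesis by (metis (no_types) integral_unique ext)
qed

lemma ode_sol_exists:
  assumes L: "0 < L" and g: "continuous_on {0..L} g"
  obtains y y' where "ode_sol g L y y'" "y 0 = 0" "y' 0 = 1"
proof -
  obtain M where M: "\<And>x. x \<in> {0..L} \<Longrightarrow> \<bar>g x\<bar> \<le> M"
    using compact_imp_bounded[OF compact_continuous_image[OF g compact_Icc]] unfolding bounded_real by blast
  have M0: "0 \<le> M" using M[of 0] L by auto
  define a where "a = M*L*L"
  have picard_le: "\<bar>picard g n x\<bar> \<le> L * (inverse (fact n) * a^n)" if x: "x\<in>{0..L}" for n x
  proof -
    have "\<bar>picard g n x\<bar> \<le> L * (M*L)^n * x^n / fact n" using picard_bound[OF g M M0 x] .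
    also have "\<dots> \<le> L * (M*L)^n * L^n / fact n"
      using x L M0 by (intro divide_right_mono mult_left_mono power_mono) auto
    finally show ?thesis by (simp add: a_def power_mult_distrib field_simps)
  qed
  have picard_rhs_le: "\<bar>picard_rhs g n x\<bar> \<le> inverse (fact (n+1)) * a^(n+1)" if x: "x\<in>{0..L}" for n x
  proof -
    have "\<bar>picard_rhs g n x\<bar> \<le> (M*L) ^ Suc n * x ^ Suc n / fact (Suc n)"
      using picard_rhs_bound[OF g M M0 picard_bound[OF g M M0] x] by blast
    also have "\<dots> \<le> (M*L) ^ Suc n * L ^ Suc n / fact (Suc n)"
      using x L M0 by (intro divide_right_mono mult_left_mono power_mono) auto
    finally show ?thesis by (simp add: a_def power_mult_distrib field_simps)
  qed
  have s1: "summable (\<lambda>n. L * (inverse (fact n) * a^n))"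
    by (intro summable_mult summable_exp)
  have s2: "summable (\<lambda>n. inverse (fact (n+1)) * a^(n+1))"
    using summable_ignore_initial_segment[OF summable_exp[of a], of 1] by simp
  define Y where "Y x = (\<Sum>n. picard g n x)" for x
  define Z where "Z x = (\<Sum>n. picard_rhs g n x)" for x
  have cpic: "continuous_on {0..L} (picard g n)" "continuous_on {0..L} (picard_rhs g n)" for n
    using picard_continuous[OF g] by auto
  have uY: "uniform_limit {0..L} (\<lambda>N x. \<Sum>n<N. picard g n x) Y sequentially"
    unfolding Y_def by (rule Weierstrass_m_test[OF _ s1]) (use picard_le in auto)
  have uZ: "uniform_limit {0..L} (\<lambda>N x. \<Sum>n<N. picard_rhs g n x) Z sequentially"
    unfolding Z_def by (rule Weierstrass_m_test[OF _ s2]) (use picard_rhs_le in auto)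
  have uGY: "uniform_limit {0..L} (\<lambda>N x. \<Sum>n<N. g x * picard g n x) (\<lambda>x. g x * Y x) sequentially"
  proof -
    have lim: "uniform_limit {0..L} (\<lambda>N x. \<Sum>n<N. g x * picard g n x) (\<lambda>x. \<Sum>n. g x * picard g n x) sequentially"
    proof (rule Weierstrass_m_test[OF _ summable_mult[OF s1, of M]])
      fix n x assume x: "x \<in> {0..L}"
      show "norm (g x * picard g n x) \<le> M * (L * (inverse (fact n) * a^n))"
        unfolding norm_mult real_norm_def abs_mult using M[OF x] picard_le[OF x, of n] by (intro mult_mono) auto
    qed
    have eq: "(\<Sum>n. g x * picard g n x) = g x * Y x" if "x \<in> {0..L}" for x
      unfolding Y_def using that picard_le
      by (subst suminf_mult) (auto intro: summable_comparison_test'[OF s1])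
    show ?thesis
      using lim by (rule uniform_limit_cong'[THEN iffD1, rotated -1]) (simp_all add: eq)
  qed
  have cY: "continuous_on {0..L} Y" and cZ: "continuous_on {0..L} Z"
    by (rule uniform_limit_theorem[OF _ uY] uniform_limit_theorem[OF _ uZ],
        auto intro!: always_eventually continuous_intros cpic)+
  have Y_eq: "Y x = x - integral {0..x} Z" if x: "x \<in> {0..L}" for x
  proof -
    have "(\<lambda>N. \<Sum>n<Suc N. picard g n x) \<longlonglongrightarrow> Y x"
      unfolding Y_def using x picard_le
      by (intro LIMSEQ_Suc summable_LIMSEQ summable_comparison_test'[OF s1]) auto
    moreover have "(\<Sum>n<Suc N. picard g n x) = x - integral {0..x} (\<lambda>s. \<Sum>n<N. picard_rhs g n s)" for N
      using x by (subst sum.lessThan_Suc_shift)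
        (simp del: picard.simps add: picard.simps(1) picard_Suc integral_sum integrable_continuous_real sum_negf
           continuous_on_subset[OF cpic(2)])
    moreover have "(\<lambda>N. x - integral {0..x} (\<lambda>s. \<Sum>n<N. picard_rhs g n s)) \<longlonglongrightarrow> x - integral {0..x} Z"
      by (intro tendsto_diff tendsto_const uniform_limit_integral_tendsto[OF uZ _ x])
         (auto intro!: continuous_intros cpic)
    ultimately show ?thesis using LIMSEQ_unique by auto
  qed
  have Z_eq: "Z x = integral {0..x} (\<lambda>t. g t * Y t)" if x: "x \<in> {0..L}" for x
  proof -
    have "(\<lambda>N. \<Sum>n<N. picard_rhs g n x) \<longlonglongrightarrow> Z x"
      unfolding Z_def using x picard_rhs_le
      by (intro summable_LIMSEQ summable_comparison_test'[OF s2]) auto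
    moreover have "(\<Sum>n<N. picard_rhs g n x) = integral {0..x} (\<lambda>t. \<Sum>n<N. g t * picard g n t)" for N
    proof -
      have "continuous_on {0..x} (\<lambda>t. g t * picard g n t)" for n
        by (rule continuous_on_subset[of "{0..L}"]) (use x in \<open>auto intro!: continuous_intros cpic g\<close>)
      then show ?thesis by (simp add: picard_rhs_def integral_sum integrable_continuous_real)
    qed
    moreover have "(\<lambda>N. integral {0..x} (\<lambda>t. \<Sum>n<N. g t * picard g n t)) \<longlonglongrightarrow> integral {0..x} (\<lambda>t. g t * Y t)"
      by (intro uniform_limit_integral_tendsto[OF uGY _ x]) (auto intro!: continuous_intros cpic g)
    ultimately show ?thesis using LIMSEQ_unique by auto
  qed
  have "ode_sol g L Y (\<lambda>x. 1 - Z x)"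
    unfolding ode_sol_def
  proof (intro ballI conjI)
    fix x assume x: "x \<in> {0..L}"
    have "((\<lambda>u. u - integral {0..u} Z) has_real_derivative 1 - Z x) (at x within {0..L})"
      by (intro DERIV_diff DERIV_ident indefinite_integral_has_real_derivative cZ x)
    then show "(Y has_real_derivative 1 - Z x) (at x within {0..L})"
      by (rule has_field_derivative_transform_within[OF _ zero_less_one x]) (simp add: Y_eq)
    have "continuous_on {0..L} (\<lambda>t. g t * Y t)" by (intro continuous_intros g cY)
    then have "((\<lambda>u. 1 - integral {0..u} (\<lambda>t. g t * Y t)) has_real_derivative 0 - g x * Y x) (at x within {0..L})"
      by (intro DERIV_diff DERIV_const indefinite_integral_has_real_derivative x)
    then have "((\<lambda>u. 1 - integral {0..u} (\<lambda>t. g t * Y t)) has_real_derivative - g x * Y x) (at x within {0..L})"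
      by simp
    then show "((\<lambda>x. 1 - Z x) has_real_derivative - g x * Y x) (at x within {0..L})"
      by (rule has_field_derivative_transform_within[OF _ zero_less_one x]) (simp_all add: Z_eq)
  qed
  then show ?thesis using that by (simp add: Y_def Z_def)
qed

lemma le_of_deriv_nonneg_within:
  fixes G G' :: "real \<Rightarrow> real"
  assumes d: "\<And>t. t \<in> {0..L} \<Longrightarrow> (G has_real_derivative G' t) (at t within {0..L})"
    and ab: "a \<le> b" "0 \<le> a" "b \<le> L" and nonneg: "\<And>t. a < t \<Longrightarrow> t < b \<Longrightarrow> G' t \<ge> 0"
  shows "G a \<le> G b"
proof (rule DERIV_nonneg_imp_increasing_open[OF ab(1)])
  show "continuous_on {a..b} G"
    by (rule continuous_on_subset[OF DERIV_continuous_on[OF d]]) (use ab in auto)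
  fix t assume t: "a < t" "t < b"
  have "at t within {0..L} = at t" using t ab by (intro at_within_Icc_at) auto
  then show "\<exists>y. DERIV G t :> y \<and> 0 \<le> y" using d[of t] nonneg t ab by auto
qed

lemma gronwall_forward:
  fixes E E' :: "real \<Rightarrow> real"
  assumes d: "\<And>t. t \<in> {0..L} \<Longrightarrow> (E has_real_derivative E' t) (at t within {0..L})"
    and le: "\<And>t. t \<in> {0..L} \<Longrightarrow> E' t \<le> c * E t + k" and "0 \<le> c" "0 \<le> k"
    and x: "0 \<le> a" "a \<le> x" "x \<le> L"
  shows "E x \<le> (E a + k * (x - a)) * exp (c * (x - a))"
proof -
  define G where "G t = k * (t - a) - E t * exp (- c * (t - a))" for t
  have "G a \<le> G x"
  proof (rule le_of_deriv_nonneg_within[OF _ x(2) x(1) x(3)])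
    fix t assume t: "t \<in> {0..L}"
    show "(G has_real_derivative (k - (E' t * exp (- c * (t - a)) + E t * (exp (- c * (t - a)) * (- c))))) (at t within {0..L})"
      unfolding G_def[abs_def] using d[OF t]
      by (auto intro!: derivative_eq_intros simp: algebra_simps)
  next
    fix t assume t: "a < t" "t < x"
    have "E' t * exp (- c * (t - a)) \<le> (c * E t + k) * exp (- c * (t - a))"
      using le[of t] t x by (intro mult_right_mono) auto
    moreover have "k * exp (- c * (t - a)) \<le> k"
      using t \<open>0 \<le> c\<close> \<open>0 \<le> k\<close> by (simp add: mult_left_le)
    ultimately show "0 \<le> k - (E' t * exp (- c * (t - a)) + E t * (exp (- c * (t - a)) * - c))"
      by (simp add: algebra_simps)
  qed
  then have "E x * exp (- c * (x - a)) \<le> E a + k * (x - a)" by (simp add: G_def)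
  then have "(E x * exp (- c * (x - a))) * exp (c * (x - a)) \<le> (E a + k * (x - a)) * exp (c * (x - a))"
    by (intro mult_right_mono) auto
  then show ?thesis by (simp add: mult.assoc exp_add[symmetric])
qed

lemma gronwall_backward:
  fixes E E' :: "real \<Rightarrow> real"
  assumes d: "\<And>t. t \<in> {0..L} \<Longrightarrow> (E has_real_derivative E' t) (at t within {0..L})"
    and le: "\<And>t. t \<in> {0..L} \<Longrightarrow> - c * E t \<le> E' t"
    and x: "0 \<le> x" "x \<le> a" "a \<le> L"
  shows "E x * exp (c * x) \<le> E a * exp (c * a)"
proof (rule le_of_deriv_nonneg_within[OF _ x(2) x(1) x(3)])
  fix t assume t: "t \<in> {0..L}"
  show "((\<lambda>t. E t * exp (c * t)) has_real_derivative (E' t * exp (c * t) + E t * (exp (c * t) * c))) (at t within {0..L})"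
    using d[OF t] by (auto intro!: derivative_eq_intros)
next
  fix t assume t: "x < t" "t < a"
  have "0 \<le> (E' t + c * E t) * exp (c * t)" using le[of t] t x by simp
  then show "0 \<le> E' t * exp (c * t) + E t * (exp (c * t) * c)" by (simp add: algebra_simps)
qed

lemma ode_sol_energy_deriv:
  assumes "ode_sol g L u u'" "t \<in> {0..L}"
  shows "((\<lambda>x. (u x)\<^sup>2 + (u' x)\<^sup>2) has_real_derivative 2 * u t * u' t * (1 - g t)) (at t within {0..L})"
  using ode_solD[OF assms] unfolding power2_eq_square
  by (auto intro!: derivative_eq_intros simp: algebra_simps)

lemma energy_deriv_bound:
  fixes u u' g :: "real \<Rightarrow> real"
  assumes "\<bar>g t\<bar> \<le> M"
  shows "\<bar>2 * u t * u' t * (1 - g t)\<bar> \<le> (1 + M) * ((u t)\<^sup>2 + (u' t)\<^sup>2)"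
proof -
  have "\<bar>2 * u t * u' t\<bar> \<le> (u t)\<^sup>2 + (u' t)\<^sup>2"
    using sum_squares_bound[of "\<bar>u t\<bar>" "\<bar>u' t\<bar>"] by (simp add: abs_mult)
  moreover have "\<bar>1 - g t\<bar> \<le> 1 + M" using assms by auto
  ultimately have "\<bar>2 * u t * u' t\<bar> * \<bar>1 - g t\<bar> \<le> ((u t)\<^sup>2 + (u' t)\<^sup>2) * (1 + M)"
    by (intro mult_mono) auto
  then show ?thesis by (simp add: abs_mult mult.commute)
qed

text \<open>The energy \<open>u\<^sup>2 + u'\<^sup>2\<close> grows at most exponentially in both directions.\<close>

lemma ode_sol_zero:
  assumes s: "ode_sol g L u u'" and M: "\<And>t. t \<in> {0..L} \<Longrightarrow> \<bar>g t\<bar> \<le> M"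
    and a: "a \<in> {0..L}" "u a = 0" "u' a = 0" and x: "x \<in> {0..L}"
  shows "u x = 0 \<and> u' x = 0"
proof -
  define E where "E x = (u x)\<^sup>2 + (u' x)\<^sup>2" for x
  have d: "\<And>t. t \<in> {0..L} \<Longrightarrow> (E has_real_derivative 2 * u t * u' t * (1 - g t)) (at t within {0..L})"
    unfolding E_def[abs_def] using ode_sol_energy_deriv[OF s] by blast
  have b: "\<And>t. t \<in> {0..L} \<Longrightarrow> \<bar>2 * u t * u' t * (1 - g t)\<bar> \<le> (1 + M) * E t"
    unfolding E_def using energy_deriv_bound M by blast
  have M0: "0 \<le> M" using M[OF a(1)] by auto
  have "E x \<le> 0"
  proof (cases "a \<le> x")
    case True
    have "E x \<le> (E a + 0 * (x - a)) * exp ((1 + M) * (x - a))"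
      by (rule gronwall_forward[OF d]) (use b a x True M0 in \<open>auto simp: abs_le_iff\<close>)
    then show ?thesis using a by (simp add: E_def)
  next
    case False
    have "E x * exp ((1 + M) * x) \<le> E a * exp ((1 + M) * a)"
    proof (rule gronwall_backward[OF d])
      fix t assume "t \<in> {0..L}"
      then have "\<bar>2 * u t * u' t * (1 - g t)\<bar> \<le> (1 + M) * E t" by (rule b)
      then show "- (1 + M) * E t \<le> 2 * u t * u' t * (1 - g t)"
        by (simp only: abs_le_iff mult_minus_left) linarith
    qed (use a x False in auto)
    then show ?thesis using a by (simp add: E_def mult_le_0_iff)
  qed
  then show ?thesis unfolding E_def by (simp add: sum_power2_le_zero_iff)
qed

lemma ode_sol_eq_scaled:
  assumes "ode_sol g L u u'" "ode_sol g L v v'" "\<And>t. t \<in> {0..L} \<Longrightarrow> \<bar>g t\<bar> \<le> M"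
    and "0 \<le> L" "u 0 = 0" "v 0 = 0" "v' 0 = 1" "x \<in> {0..L}"
  shows "u x = u' 0 * v x"
  using ode_sol_zero[OF ode_sol_lincomb[OF assms(1,2), of 1 "- u' 0"] assms(3), of 0 x] assms(4-)
  by simp

lemma ode_sol_zero_of_zero_on_interval:
  assumes s: "ode_sol g L u u'" and M: "\<And>t. t \<in> {0..L} \<Longrightarrow> \<bar>g t\<bar> \<le> M"
    and ab: "0 \<le> a" "a < b" "b \<le> L" and z: "\<And>x. x \<in> {a..b} \<Longrightarrow> u x = 0"
    and x: "x \<in> {0..L}"
  shows "u x = 0 \<and> u' x = 0"
proof -
  define t where "t = (a + b) / 2"
  have t: "a < t" "t < b" using ab by (auto simp: t_def)
  have "DERIV u t :> 0"
    by (rule has_field_derivative_transform_within_open[OF DERIV_const, where S="{a<..<b}"])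
       (use t z in auto)
  moreover have "DERIV u t :> u' t"
    using ode_solD(1)[OF s, of t] t ab at_within_Icc_at[of 0 t L] by auto
  ultimately have "u' t = 0" by (rule DERIV_unique[rotated])
  then show ?thesis using ode_sol_zero[OF s M, of t x] z[of t] t ab x by auto
qed

lemma ode_sol_DERIV_interior:
  assumes "ode_sol g L u u'" "x \<in> {0<..<L}"
  shows "DERIV u x :> u' x"
  using ode_solD(1)[OF assms(1), of x] assms(2) at_within_Icc_at[of 0 x L] by auto

lemma ode_sol_deriv_zero_at_interior_min:
  assumes "ode_sol g L u u'" "\<And>t. t \<in> {0..L} \<Longrightarrow> u t \<ge> 0" "c \<in> {0<..<L}" "u c = 0"
  shows "u' c = 0"
proof (rule DERIV_local_min[OF ode_sol_DERIV_interior[OF assms(1,3)]])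
  show "0 < min c (L - c)" using assms(3) by auto
  show "\<forall>z. \<bar>c - z\<bar> < min c (L - c) \<longrightarrow> u c \<le> u z"
    using assms(2-4) by (auto simp: abs_less_iff)
qed

section \<open>Nodal intervals and Sturm comparison\<close>

lemma nodal_interval:
  fixes u :: "real \<Rightarrow> real"
  assumes c: "continuous_on {0..L} u" and u0: "u 0 = 0" and uL: "u L = 0"
    and x: "x \<in> {0..L}" "u x \<noteq> 0"
  obtains a b where "0 \<le> a" "a < x" "x < b" "b \<le> L" "u a = 0" "u b = 0" "\<forall>y\<in>{a<..<b}. u y \<noteq> 0"
proof -
  have zeros_compact: "compact {y \<in> {s..t}. u y = 0}" if "0 \<le> s" "t \<le> L" for s t
  proof -
    have "closed {y \<in> {s..t}. u y = 0}"
      using that by (intro continuous_closed_preimage_constant continuous_on_subset[OF c]) auto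
    moreover have "bounded {y \<in> {s..t}. u y = 0}" by (rule bounded_subset[of "{s..t}"]) auto
    ultimately show ?thesis by (simp add: compact_eq_bounded_closed)
  qed
  obtain a where a: "a \<in> {y \<in> {0..x}. u y = 0}" "\<forall>y\<in>{y \<in> {0..x}. u y = 0}. y \<le> a"
    using compact_attains_sup[OF zeros_compact] x u0 by force
  obtain b where b: "b \<in> {y \<in> {x..L}. u y = 0}" "\<forall>y\<in>{y \<in> {x..L}. u y = 0}. b \<le> y"
    using compact_attains_inf[OF zeros_compact] x uL by force
  have "a \<noteq> x" "b \<noteq> x" using a b x by auto
  moreover have "u y \<noteq> 0" if y: "y \<in> {a<..<b}" for y
  proof
    assume "u y = 0"
    then have "y \<le> a \<or> b \<le> y"
      using a(2)[rule_format, of y] b(2)[rule_format, of y] a(1) b(1) y by (cases "y \<le> x") auto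
    then show False using y by auto
  qed
  ultimately show ?thesis using a(1) b(1) by (intro that[of a b]) auto
qed

lemma two_nodal_intervals:
  assumes s: "ode_sol g L u u'" and M: "\<And>t. t \<in> {0..L} \<Longrightarrow> \<bar>g t\<bar> \<le> M"
    and "u 0 = 0" "u L = 0" "x \<in> {0..L}" "u x \<noteq> 0" and z: "z \<in> {0<..<L}" "u z = 0"
  obtains a1 b1 a2 b2 where "0 \<le> a1" "a1 < b1" "b1 \<le> a2" "a2 < b2" "b2 \<le> L"
    "u a1 = 0" "u b1 = 0" "\<forall>y\<in>{a1<..<b1}. u y \<noteq> 0"
    "u a2 = 0" "u b2 = 0" "\<forall>y\<in>{a2<..<b2}. u y \<noteq> 0"
proof -
  have nonzero_on: "\<exists>y\<in>{s..t}. u y \<noteq> 0" if "0 \<le> s" "s < t" "t \<le> L" for s t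
    using ode_sol_zero_of_zero_on_interval[OF s M that] assms(5,6) by blast
  obtain x1 where x1: "x1 \<in> {0..z}" "u x1 \<noteq> 0" using nonzero_on[of 0 z] z by auto
  obtain x2 where x2: "x2 \<in> {z..L}" "u x2 \<noteq> 0" using nonzero_on[of z L] z by auto
  obtain a1 b1 where ab1: "0 \<le> a1" "a1 < x1" "x1 < b1" "b1 \<le> L" "u a1 = 0" "u b1 = 0"
      "\<forall>y\<in>{a1<..<b1}. u y \<noteq> 0"
    using nodal_interval[OF ode_sol_continuous(1)[OF s] assms(3,4), of x1] x1 z by auto
  obtain a2 b2 where ab2: "0 \<le> a2" "a2 < x2" "x2 < b2" "b2 \<le> L" "u a2 = 0" "u b2 = 0"
      "\<forall>y\<in>{a2<..<b2}. u y \<noteq> 0"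
    using nodal_interval[OF ode_sol_continuous(1)[OF s] assms(3,4), of x2] x2 z by auto
  have "b1 \<le> z" "z \<le> a2" using ab1(2,7) ab2(3,7) x1 x2 z by force+
  then show ?thesis by (intro that[of a1 b1 a2 b2]) (use ab1 ab2 in auto)
qed

lemma continuous_nonzero_sign:
  fixes f :: "real \<Rightarrow> real"
  assumes c: "continuous_on {a..b} f" and nz: "\<And>x. x \<in> {a<..<b} \<Longrightarrow> f x \<noteq> 0"
  obtains s where "\<bar>s\<bar> = 1" "\<And>x. x \<in> {a<..<b} \<Longrightarrow> s * f x > 0"
proof -
  have "(\<forall>x\<in>{a<..<b}. f x > 0) \<or> (\<forall>x\<in>{a<..<b}. f x < 0)"
  proof (rule ccontr)
    assume "\<not> ?thesis"
    then obtain x y where xy: "x \<in> {a<..<b}" "y \<in> {a<..<b}" "f x > 0" "f y < 0"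
      using nz by (meson linorder_neqE_linordered_idom)
    have "continuous_on {min x y..max x y} f" by (rule continuous_on_subset[OF c]) (use xy in auto)
    then obtain z where "min x y \<le> z" "z \<le> max x y" "f z = 0"
      using IVT2'[of f y 0 x] IVT'[of f y 0 x] xy by (cases "x \<le> y") (auto simp: min_def max_def)
    then show False using nz[of z] xy by (auto simp: min_le_iff_disj le_max_iff_disj)
  qed
  then show ?thesis using that[of 1] that[of "-1"] by force
qed

lemma deriv_nonneg_at_left_zero:
  fixes u :: "real \<Rightarrow> real"
  assumes d: "(u has_real_derivative D) (at a within {0..L})" and "u a = 0"
    and ab: "0 \<le> a" "a < b" "b \<le> L" and pos: "\<And>x. x \<in> {a<..<b} \<Longrightarrow> u x > 0"
  shows "D \<ge> 0"
proof (rule ccontr)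
  assume "\<not> D \<ge> 0"
  then obtain e where e: "e > 0" "\<forall>h>0. a + h \<in> {0..L} \<longrightarrow> h < e \<longrightarrow> u a > u (a + h)"
    using has_real_derivative_neg_dec_right[OF d] by force
  define h where "h = min (e/2) ((b - a)/2)"
  have "h > 0" "h < e" "h \<le> (b - a)/2" using e ab by (auto simp: h_def min_def)
  then show False using e pos[of "a + h"] ab \<open>u a = 0\<close> by auto
qed

lemma deriv_nonpos_at_right_zero:
  fixes u :: "real \<Rightarrow> real"
  assumes d: "(u has_real_derivative D) (at b within {0..L})" and "u b = 0"
    and ab: "0 \<le> a" "a < b" "b \<le> L" and pos: "\<And>x. x \<in> {a<..<b} \<Longrightarrow> u x > 0"
  shows "D \<le> 0"
proof (rule ccontr)
  assume "\<not> D \<le> 0"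
  then obtain e where e: "e > 0" "\<forall>h>0. b - h \<in> {0..L} \<longrightarrow> h < e \<longrightarrow> - u b < - u (b - h)"
    using has_real_derivative_neg_dec_left[OF DERIV_minus[OF d]] by force
  define h where "h = min (e/2) ((b - a)/2)"
  have "h > 0" "h < e" "h \<le> (b - a)/2" using e ab by (auto simp: h_def min_def)
  then show False using e pos[of "b - h"] ab \<open>u b = 0\<close> by auto
qed

text \<open>The Wronskian \<open>u' v - u v'\<close> increases strictly on the nodal interval, but is \<open>\<ge> 0\<close> at its
  left end and \<open>\<le> 0\<close> at its right end.\<close>

lemma sturm_comparison_pos:
  assumes su: "ode_sol (\<lambda>x. q x + l) L u u'" and sv: "ode_sol (\<lambda>x. q x + m) L v v'"
    and "l < m" and ab: "0 \<le> a" "a < b" "b \<le> L" and "u a = 0" "u b = 0"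
    and pos: "\<And>x. x \<in> {a<..<b} \<Longrightarrow> u x > 0 \<and> v x > 0"
  shows False
proof -
  define W where "W t = u' t * v t - u t * v' t" for t
  have dW: "(W has_real_derivative (m - l) * u t * v t) (at t within {0..L})" if "t \<in> {0..L}" for t
    unfolding W_def[abs_def] using ode_solD[OF su that] ode_solD[OF sv that]
    by (auto intro!: derivative_eq_intros simp: algebra_simps)
  have "continuous_on {a..b} W"
    by (rule continuous_on_subset[OF DERIV_continuous_on[OF dW]]) (use ab in auto)
  moreover have "W differentiable (at x)" if "a < x" "x < b" for x
    using dW[of x] that ab at_within_Icc_at[of 0 x L] by (auto simp: real_differentiable_def)
  ultimately obtain D z where z: "a < z" "z < b" "DERIV W z :> D" "W b - W a = (b - a) * D"
    using MVT[OF ab(2)] by blast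
  have "D = (m - l) * u z * v z"
    using DERIV_unique[OF z(3)] dW[of z] z ab at_within_Icc_at[of 0 z L] by auto
  then have "W b - W a > 0" using pos[of z] z \<open>l < m\<close> by simp
  moreover have "u' a \<ge> 0"
    by (rule deriv_nonneg_at_left_zero[OF ode_solD(1)[OF su] \<open>u a = 0\<close> ab]) (use ab pos in auto)
  moreover have "u' b \<le> 0"
    by (rule deriv_nonpos_at_right_zero[OF ode_solD(1)[OF su] \<open>u b = 0\<close> ab]) (use ab pos in auto)
  moreover have "v a \<ge> 0" "v b \<ge> 0"
  proof -
    have "continuous_on (closure {a<..<b}) v"
      using ab by (auto intro: continuous_on_subset[OF ode_sol_continuous(1)[OF sv]])
    then show "v a \<ge> 0" "v b \<ge> 0"
      by (rule continuous_ge_on_closure, use ab pos in \<open>auto intro: less_imp_le\<close>)+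
  qed
  ultimately have "u' a * v a \<ge> 0" "u' b * v b \<le> 0" "u' b * v b - u' a * v a > 0"
    using \<open>u a = 0\<close> \<open>u b = 0\<close> by (simp_all add: W_def mult_nonpos_nonneg)
  then show False by linarith
qed

lemma sturm_comparison:
  assumes su: "ode_sol (\<lambda>x. q x + l) L u u'" and sv: "ode_sol (\<lambda>x. q x + m) L v v'"
    and "l < m" and ab: "0 \<le> a" "a < b" "b \<le> L" and "u a = 0" "u b = 0"
    and nz: "\<And>x. x \<in> {a<..<b} \<Longrightarrow> u x \<noteq> 0"
  shows "\<exists>c\<in>{a<..<b}. v c = 0"
proof (rule ccontr)
  assume "\<not> (\<exists>c\<in>{a<..<b}. v c = 0)"
  then have nzv: "\<And>x. x \<in> {a<..<b} \<Longrightarrow> v x \<noteq> 0" by auto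
  obtain s where s: "\<bar>s\<bar> = 1" "\<And>x. x \<in> {a<..<b} \<Longrightarrow> s * u x > 0"
    using continuous_nonzero_sign[OF continuous_on_subset[OF ode_sol_continuous(1)[OF su]] nz] ab by auto
  obtain t where t: "\<bar>t\<bar> = 1" "\<And>x. x \<in> {a<..<b} \<Longrightarrow> t * v x > 0"
    using continuous_nonzero_sign[OF continuous_on_subset[OF ode_sol_continuous(1)[OF sv]] nzv] ab by auto
  show False
    by (rule sturm_comparison_pos[OF ode_sol_scale[OF su, of s] ode_sol_scale[OF sv, of t] \<open>l < m\<close> ab])
       (use \<open>u a = 0\<close> \<open>u b = 0\<close> s t in auto)
qed

section \<open>Dependence on the spectral parameter\<close>

lemma ode_sol_energy_le:
  assumes s: "ode_sol g L y y'" and M: "\<And>t. t \<in> {0..L} \<Longrightarrow> \<bar>g t\<bar> \<le> M"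
    and "y 0 = 0" "y' 0 = 1" and x: "x \<in> {0..L}"
  shows "(y x)\<^sup>2 + (y' x)\<^sup>2 \<le> exp ((1 + M) * L)"
proof -
  define E where "E x = (y x)\<^sup>2 + (y' x)\<^sup>2" for x
  have M0: "0 \<le> M" using M[of 0] x by force
  have "E x \<le> (E 0 + 0 * (x - 0)) * exp ((1 + M) * (x - 0))"
  proof (rule gronwall_forward)
    fix t assume t: "t \<in> {0..L}"
    show "(E has_real_derivative 2 * y t * y' t * (1 - g t)) (at t within {0..L})"
      unfolding E_def[abs_def] using ode_sol_energy_deriv[OF s t] .
    show "2 * y t * y' t * (1 - g t) \<le> (1 + M) * E t + 0"
      using energy_deriv_bound[of g t M y y', OF M[OF t]] by (simp add: E_def)
  qed (use x M0 in auto)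
  also have "\<dots> \<le> exp ((1 + M) * L)" using x M0 \<open>y 0 = 0\<close> \<open>y' 0 = 1\<close> by (simp add: E_def mult_left_mono)
  finally show ?thesis by (simp add: E_def)
qed

text \<open>Gronwall for the energy of the difference, the parameter difference entering as a source term.\<close>

lemma ode_sol_param_dependence:
  assumes su: "ode_sol (\<lambda>x. q x + l1) L u u'" and sv: "ode_sol (\<lambda>x. q x + l2) L v v'"
    and init: "u 0 = v 0" "u' 0 = v' 0"
    and M: "\<And>t. t \<in> {0..L} \<Longrightarrow> \<bar>q t + l1\<bar> \<le> M"
    and B: "\<And>t. t \<in> {0..L} \<Longrightarrow> (v t)\<^sup>2 \<le> B" and x: "x \<in> {0..L}"
  shows "(u x - v x)\<^sup>2 \<le> \<bar>l1 - l2\<bar> * B * L * exp ((1 + M + \<bar>l1 - l2\<bar>) * L)"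
proof -
  define d where "d = l1 - l2"
  define w where "w x = u x - v x" for x
  define w' where "w' x = u' x - v' x" for x
  define E where "E x = (w x)\<^sup>2 + (w' x)\<^sup>2" for x
  define E' where "E' t = 2 * w t * w' t * (1 - (q t + l1)) - 2 * d * w' t * v t" for t
  have dE: "(E has_real_derivative E' t) (at t within {0..L})" if t: "t \<in> {0..L}" for t
  proof -
    note d = ode_solD[OF su t] ode_solD[OF sv t]
    have dw: "(w has_real_derivative w' t) (at t within {0..L})"
      unfolding w_def[abs_def] w'_def using DERIV_diff[OF d(1) d(3)] .
    have dw': "(w' has_real_derivative (- (q t + l1) * w t - d * v t)) (at t within {0..L})"
      unfolding w'_def[abs_def] w_def d_def
      by (rule DERIV_cong[OF DERIV_diff[OF d(2) d(4)]]) (simp add: algebra_simps)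
    show ?thesis unfolding E_def[abs_def] power2_eq_square
      by (rule DERIV_cong[OF DERIV_add[OF DERIV_mult[OF dw dw] DERIV_mult[OF dw' dw']]])
         (simp add: E'_def algebra_simps)
  qed
  have M0: "0 \<le> M" using M[of 0] x by force
  have B0: "0 \<le> B" using B[of 0] x by (meson atLeastAtMost_iff order.trans zero_le_power2 order_refl)
  have le: "E' t \<le> (1 + M + \<bar>d\<bar>) * E t + \<bar>d\<bar> * B" if t: "t \<in> {0..L}" for t
  proof -
    have 1: "\<bar>2 * w t * w' t * (1 - (q t + l1))\<bar> \<le> (1 + M) * E t"
      unfolding E_def by (rule energy_deriv_bound[of "\<lambda>t. q t + l1" t M w w', OF M[OF t]])
    have "\<bar>2 * d * w' t * v t\<bar> = \<bar>d\<bar> * \<bar>2 * \<bar>w' t\<bar> * \<bar>v t\<bar>\<bar>" by (simp add: abs_mult)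
    also have "\<dots> \<le> \<bar>d\<bar> * ((w' t)\<^sup>2 + (v t)\<^sup>2)"
      using sum_squares_bound[of "\<bar>w' t\<bar>" "\<bar>v t\<bar>"] by (intro mult_left_mono) auto
    also have "\<dots> \<le> \<bar>d\<bar> * (E t + B)"
      using B[OF t] zero_le_power2[of "w t"] unfolding E_def by (intro mult_left_mono) linarith+
    finally have 2: "\<bar>2 * d * w' t * v t\<bar> \<le> \<bar>d\<bar> * E t + \<bar>d\<bar> * B" by (simp add: algebra_simps)
    have "E' t \<le> \<bar>2 * w t * w' t * (1 - (q t + l1))\<bar> + \<bar>2 * d * w' t * v t\<bar>"
      unfolding E'_def by linarith
    then show ?thesis using 1 2 by (simp add: algebra_simps)
  qed
  have "E x \<le> (E 0 + \<bar>d\<bar> * B * (x - 0)) * exp ((1 + M + \<bar>d\<bar>) * (x - 0))"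
    by (rule gronwall_forward[OF dE le]) (use x M0 B0 in auto)
  also have "\<dots> = \<bar>d\<bar> * B * x * exp ((1 + M + \<bar>d\<bar>) * x)"
    by (simp add: E_def w_def w'_def init)
  also have "\<dots> \<le> \<bar>d\<bar> * B * L * exp ((1 + M + \<bar>d\<bar>) * L)"
    using x M0 B0 by (intro mult_mono mult_left_mono) (auto intro: mult_left_mono)
  finally have "E x \<le> \<bar>d\<bar> * B * L * exp ((1 + M + \<bar>d\<bar>) * L)" .
  moreover have "(u x - v x)\<^sup>2 \<le> E x" by (simp add: E_def w_def)
  ultimately show ?thesis by (simp add: d_def)
qed

lemma ode_sol_ge_half_near_0:
  assumes s: "ode_sol g L y y'" and M: "\<And>t. t \<in> {0..L} \<Longrightarrow> \<bar>g t\<bar> \<le> M"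
    and B: "\<And>t. t \<in> {0..L} \<Longrightarrow> \<bar>y t\<bar> \<le> B"
    and "y 0 = 0" "y' 0 = 1" and x: "0 < x" "x \<le> L" and small: "M * B * x \<le> 1 / 2"
  shows "y x \<ge> x / 2"
proof -
  have M0: "0 \<le> M" using M[of 0] x by force
  have B0: "0 \<le> B" using B[of 0] x by force
  have y'_ge: "y' t \<ge> 1 / 2" if t: "t \<in> {0..x}" for t
  proof -
    have "norm (y' t - y' 0) \<le> (M * B) * norm (t - 0)"
    proof (rule field_differentiable_bound[where S="{0..L}" and f'="\<lambda>t. - g t * y t"])
      fix z assume z: "z \<in> {0..L}"
      show "(y' has_field_derivative - g z * y z) (at z within {0..L})" using ode_solD(2)[OF s z] .
      have "\<bar>g z\<bar> * \<bar>y z\<bar> \<le> M * B" using M[OF z] B[OF z] B0 by (intro mult_mono) auto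
      then show "norm (- g z * y z) \<le> M * B" by (simp add: abs_mult)
    qed (use t x in auto)
    then have "\<bar>y' t - 1\<bar> \<le> M * B * t" using t \<open>y' 0 = 1\<close> by simp
    moreover have "M * B * t \<le> M * B * x" using t M0 B0 by (intro mult_left_mono) auto
    ultimately show ?thesis using small by (simp add: abs_le_iff)
  qed
  have "y 0 - 0 / 2 \<le> y x - x / 2"
  proof (rule le_of_deriv_nonneg_within[where G="\<lambda>t. y t - t / 2" and G'="\<lambda>t. y' t - 1 / 2"])
    fix t assume t: "t \<in> {0..L}"
    show "((\<lambda>t. y t - t / 2) has_real_derivative y' t - 1 / 2) (at t within {0..L})"
      using DERIV_diff[OF ode_solD(1)[OF s t] DERIV_cdivide[OF DERIV_ident, where c=2]] by simp
  next
    fix t assume "0 < t" "t < x"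
    then show "0 \<le> y' t - 1 / 2" using y'_ge[of t] by simp
  qed (use x in auto)
  then show ?thesis using \<open>y 0 = 0\<close> by simp
qed

lemma ode_sol_pos_of_coeff_le_neg_one:
  assumes s: "ode_sol g L y y'" and neg: "\<And>t. t \<in> {0..L} \<Longrightarrow> g t \<le> -1"
    and M: "\<And>t. t \<in> {0..L} \<Longrightarrow> \<bar>g t\<bar> \<le> M"
    and y0: "y 0 = 0" and y'0: "y' 0 = 1" and x: "x \<in> {0<..L}"
  shows "y x > 0"
proof -
  define E where "E t = y t * y' t" for t
  define E' where "E' t = y' t * y' t + - g t * y t * y t" for t
  have dE: "(E has_real_derivative E' t) (at t within {0..L})" if "t \<in> {0..L}" for t
    unfolding E_def[abs_def] E'_def using DERIV_mult[OF ode_solD[OF s that]] .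
  have E'_pos: "E' t > 0" if t: "t \<in> {0..L}" for t
  proof -
    have "\<not> (y t = 0 \<and> y' t = 0)" using ode_sol_zero[OF s M t, of 0] y'0 x by auto
    then have "(y' t)\<^sup>2 + (y t)\<^sup>2 > 0" by (auto simp: sum_power2_gt_zero_iff)
    then have "y' t * y' t + y t * y t > 0" by (simp add: power2_eq_square)
    moreover have "1 * (y t * y t) \<le> - g t * (y t * y t)" using neg[OF t] by (intro mult_right_mono) auto
    ultimately show ?thesis unfolding E'_def by (simp add: mult.assoc)
  qed
  have E_pos: "E t > 0" if t: "t \<in> {0<..L}" for t
  proof -
    have cont: "continuous_on {0..t} E"
      by (rule continuous_on_subset[OF DERIV_continuous_on[OF dE]]) (use t in auto)
    have DERIV_E: "DERIV E z :> E' z" if "0 < z" "z < t" for z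
      using dE[of z] that t at_within_Icc_at[of 0 z L] by auto
    then have "E differentiable (at z)" if "0 < z" "z < t" for z
      using that by (auto simp: real_differentiable_def)
    then obtain D z where z: "0 < z" "z < t" "DERIV E z :> D" "E t - E 0 = (t - 0) * D"
      using MVT[OF _ cont] t by auto
    have "D = E' z" using DERIV_unique[OF z(3) DERIV_E[OF z(1,2)]] .
    then show ?thesis using E'_pos[of z] z t y0 by (simp add: E_def)
  qed
  show ?thesis
  proof (rule ccontr)
    assume "\<not> y x > 0"
    moreover have "y x \<noteq> 0" using E_pos[OF x] by (auto simp: E_def)
    ultimately have "y x < 0" by simp
    have "(y has_real_derivative 1) (at 0 within {0..L})" using ode_solD(1)[OF s, of 0] x y'0 by auto
    then obtain e where e: "e > 0" "\<forall>h>0. 0 + h \<in> {0..L} \<longrightarrow> h < e \<longrightarrow> y 0 < y (0 + h)"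
      using has_real_derivative_pos_inc_right[of y 1 0 "{0..L}"] by force
    define h where "h = min (e/2) x"
    have h: "0 < h" "h \<le> x" "h < e" using e x by (auto simp: h_def min_def)
    then have "y h > 0" using e x y0 by auto
    moreover have "continuous_on {h..x} y"
      by (rule continuous_on_subset[OF ode_sol_continuous(1)[OF s]]) (use h x in auto)
    ultimately obtain z where "h \<le> z" "z \<le> x" "y z = 0" using IVT2'[of y x 0 h] \<open>y x < 0\<close> h by auto
    then show False using E_pos[of z] h x by (auto simp: E_def)
  qed
qed

section \<open>Symmetric coefficients\<close>

lemma has_real_derivative_unique_within_Icc:
  fixes f :: "real \<Rightarrow> real"
  assumes "0 < L" "x \<in> {0..L}"
    and "(f has_real_derivative a) (at x within {0..L})" "(f has_real_derivative b) (at x within {0..L})"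
  shows "a = b"
  using vector_derivative_unique_within_closed_interval[OF assms(1), of x f a b] assms
  by (simp add: has_real_derivative_iff_has_vector_derivative)

lemma has_real_derivative_reflect:
  fixes u :: "real \<Rightarrow> real"
  assumes "(u has_real_derivative D) (at (L - x) within {0..L})"
  shows "((\<lambda>x. u (L - x)) has_real_derivative - D) (at x within {0..L})"
proof -
  have "(\<lambda>x. L - x) ` {0..L} = {0..L}" by (auto simp: image_iff intro: bexI[of _ "L - _"])
  then have "(u has_real_derivative D) (at ((\<lambda>x. L - x) x) within ((\<lambda>x. L - x) ` {0..L}))"
    using assms by simp
  moreover have "((\<lambda>x. L - x) has_real_derivative -1) (at x within {0..L})"
    by (auto intro!: derivative_eq_intros)
  ultimately have "(u \<circ> (\<lambda>x. L - x) has_real_derivative D * -1) (at x within {0..L})"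
    by (rule DERIV_image_chain)
  then show ?thesis by (simp add: o_def)
qed

lemma ode_sol_reflect:
  assumes s: "ode_sol g L u u'" and sym: "\<And>x. x \<in> {0..L} \<Longrightarrow> g (L - x) = g x"
  shows "ode_sol g L (\<lambda>x. u (L - x)) (\<lambda>x. - u' (L - x))"
  unfolding ode_sol_def
proof
  fix x assume x: "x \<in> {0..L}"
  then have x': "L - x \<in> {0..L}" by auto
  show "((\<lambda>x. u (L - x)) has_real_derivative - u' (L - x)) (at x within {0..L}) \<and>
        ((\<lambda>x. - u' (L - x)) has_real_derivative - g x * u (L - x)) (at x within {0..L})"
    using has_real_derivative_reflect[OF ode_solD(1)[OF s x']]
      DERIV_minus[OF has_real_derivative_reflect[OF ode_solD(2)[OF s x']]] sym[OF x] by simp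
qed

section \<open>The shooting solution and the principal eigenvalue\<close>

locale dirichlet_problem =
  fixes q :: "real \<Rightarrow> real" and L :: real
  assumes L_pos: "0 < L" and q_cont: "continuous_on {0..L} q"
begin

definition q_bound :: real where
  "q_bound = Sup ((\<lambda>x. \<bar>q x\<bar>) ` {0..L})"

lemma abs_q_le_q_bound: "x \<in> {0..L} \<Longrightarrow> \<bar>q x\<bar> \<le> q_bound"
  unfolding q_bound_def
proof (rule cSup_upper)
  have "continuous_on {0..L} (\<lambda>x. \<bar>q x\<bar>)" by (intro continuous_intros q_cont)
  then show "bdd_above ((\<lambda>x. \<bar>q x\<bar>) ` {0..L})"
    by (intro bounded_imp_bdd_above compact_imp_bounded compact_continuous_image compact_Icc)
qed auto

lemma q_bound_nonneg: "0 \<le> q_bound"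
  using abs_q_le_q_bound[of 0] L_pos by force

lemma abs_coeff_le: "\<bar>lam\<bar> \<le> R \<Longrightarrow> t \<in> {0..L} \<Longrightarrow> \<bar>q t + lam\<bar> \<le> q_bound + R"
  using abs_q_le_q_bound[of t] by linarith

definition shooting :: "real \<Rightarrow> (real \<Rightarrow> real) \<times> (real \<Rightarrow> real)" where
  "shooting lam = (SOME p. ode_sol (\<lambda>x. q x + lam) L (fst p) (snd p) \<and> fst p 0 = 0 \<and> snd p 0 = 1)"

definition shoot :: "real \<Rightarrow> real \<Rightarrow> real" where "shoot lam = fst (shooting lam)"

definition shoot' :: "real \<Rightarrow> real \<Rightarrow> real" where "shoot' lam = snd (shooting lam)"

lemma shoot_sol: "ode_sol (\<lambda>x. q x + lam) L (shoot lam) (shoot' lam)"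
  and shoot_0: "shoot lam 0 = 0" and shoot'_0: "shoot' lam 0 = 1"
proof -
  have "continuous_on {0..L} (\<lambda>x. q x + lam)" by (intro continuous_intros q_cont)
  then obtain y y' where "ode_sol (\<lambda>x. q x + lam) L y y'" "y 0 = 0" "y' 0 = 1"
    using ode_sol_exists[OF L_pos] by blast
  then have "\<exists>p. ode_sol (\<lambda>x. q x + lam) L (fst p) (snd p) \<and> fst p 0 = 0 \<and> snd p 0 = 1"
    by (intro exI[of _ "(y, y')"]) simp
  from someI_ex[OF this] show "ode_sol (\<lambda>x. q x + lam) L (shoot lam) (shoot' lam)"
      "shoot lam 0 = 0" "shoot' lam 0 = 1"
    by (simp_all add: shoot_def shoot'_def shooting_def)
qed

lemma ode_sol_eq_scaled_shoot:
  assumes "ode_sol (\<lambda>x. q x + lam) L u u'" "u 0 = 0" "x \<in> {0..L}"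
  shows "u x = u' 0 * shoot lam x"
  by (rule ode_sol_eq_scaled[OF assms(1) shoot_sol abs_coeff_le[OF order_refl]])
     (use assms L_pos shoot_0 shoot'_0 in auto)

lemma shoot_not_identically_zero: "\<exists>x\<in>{0..L}. shoot lam x \<noteq> 0"
proof (rule ccontr)
  assume "\<not> (\<exists>x\<in>{0..L}. shoot lam x \<noteq> 0)"
  then have "shoot' lam 0 = 0"
    using ode_sol_zero_of_zero_on_interval[OF shoot_sol[of lam] abs_coeff_le[OF order_refl],
        where a=0 and b=L and x=0] L_pos
    by auto
  then show False by (simp add: shoot'_0)
qed

lemma eigenfunction_eq_scaled_shoot:
  assumes "sl_dirichlet_eigenfunction q L lam u"
  obtains k where "k \<noteq> 0" "\<And>x. x \<in> {0..L} \<Longrightarrow> u x = k * shoot lam x"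
proof -
  obtain u' x where s: "ode_sol (\<lambda>x. q x + lam) L u u'" and "u 0 = 0" "x \<in> {0..L}" "u x \<noteq> 0"
    using assms by (auto simp: eigenfunction_iff_ode_sol)
  then have "u' 0 \<noteq> 0" using ode_sol_eq_scaled_shoot[OF s] by force
  then show ?thesis using ode_sol_eq_scaled_shoot[OF s \<open>u 0 = 0\<close>] by (rule that)
qed

lemma shoot_eigenfunction:
  "shoot lam L = 0 \<Longrightarrow> sl_dirichlet_eigenfunction q L lam (shoot lam)"
  using shoot_sol shoot_0 shoot_not_identically_zero by (auto simp: eigenfunction_iff_ode_sol)

lemma eigenvalue_iff_shoot: "sl_dirichlet_eigenvalue q L lam \<longleftrightarrow> shoot lam L = 0"
proof
  assume "sl_dirichlet_eigenvalue q L lam"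
  then obtain u where u: "sl_dirichlet_eigenfunction q L lam u"
    by (auto simp: sl_dirichlet_eigenvalue_def)
  then obtain k where "k \<noteq> 0" "\<And>x. x \<in> {0..L} \<Longrightarrow> u x = k * shoot lam x"
    using eigenfunction_eq_scaled_shoot by metis
  then show "shoot lam L = 0"
    using u L_pos by (auto simp: sl_dirichlet_eigenfunction_def)
next
  assume "shoot lam L = 0"
  then show "sl_dirichlet_eigenvalue q L lam"
    using shoot_eigenfunction unfolding sl_dirichlet_eigenvalue_def by blast
qed

lemma shoot_sq_le:
  assumes "\<bar>lam\<bar> \<le> R" "x \<in> {0..L}"
  shows "(shoot lam x)\<^sup>2 \<le> exp ((1 + (q_bound + R)) * L)"
  using ode_sol_energy_le[OF shoot_sol abs_coeff_le[OF assms(1)] shoot_0 shoot'_0 assms(2)]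
    zero_le_power2[of "shoot' lam x"] by linarith

lemma shoot_uniformly_close:
  assumes "0 < e"
  obtains \<eta> where "0 < \<eta>"
    "\<And>l1 l2 x. \<bar>l1\<bar> \<le> R \<Longrightarrow> \<bar>l2\<bar> \<le> R \<Longrightarrow> \<bar>l1 - l2\<bar> < \<eta> \<Longrightarrow> x \<in> {0..L} \<Longrightarrow>
       \<bar>shoot l1 x - shoot l2 x\<bar> < e"
proof -
  define B where "B = exp ((1 + (q_bound + R)) * L)"
  define K where "K = B * L * exp ((1 + (q_bound + R) + 1) * L)"
  have "0 \<le> K" using L_pos by (simp add: K_def B_def)
  have sq_le: "(shoot l1 x - shoot l2 x)\<^sup>2 \<le> \<bar>l1 - l2\<bar> * K"
    if "\<bar>l1\<bar> \<le> R" "\<bar>l2\<bar> \<le> R" "\<bar>l1 - l2\<bar> \<le> 1" "x \<in> {0..L}" for l1 l2 x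
  proof -
    have "(shoot l1 x - shoot l2 x)\<^sup>2 \<le> \<bar>l1 - l2\<bar> * B * L * exp ((1 + (q_bound + R) + \<bar>l1 - l2\<bar>) * L)"
      unfolding B_def
      by (rule ode_sol_param_dependence[OF shoot_sol shoot_sol])
         (use that shoot_0 shoot'_0 abs_coeff_le shoot_sq_le in auto)
    also have "\<dots> \<le> \<bar>l1 - l2\<bar> * B * L * exp ((1 + (q_bound + R) + 1) * L)"
      using that L_pos by (intro mult_left_mono) (auto simp: B_def)
    finally show ?thesis by (simp add: K_def mult.assoc)
  qed
  define \<eta> where "\<eta> = min 1 (e\<^sup>2 / (K + 1))"
  show ?thesis
  proof (rule that[of \<eta>])
    show "0 < \<eta>" using \<open>0 < e\<close> \<open>0 \<le> K\<close> by (simp add: \<eta>_def)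
    fix l1 l2 x assume l: "\<bar>l1\<bar> \<le> R" "\<bar>l2\<bar> \<le> R" "\<bar>l1 - l2\<bar> < \<eta>" and x: "x \<in> {0..L}"
    have "(shoot l1 x - shoot l2 x)\<^sup>2 \<le> \<bar>l1 - l2\<bar> * K"
      using l x by (intro sq_le) (auto simp: \<eta>_def)
    also have "\<dots> \<le> e\<^sup>2 / (K + 1) * K"
      using l \<open>0 \<le> K\<close> by (intro mult_right_mono) (auto simp: \<eta>_def)
    also have "\<dots> < e\<^sup>2"
      using \<open>0 < e\<close> \<open>0 \<le> K\<close> by (simp add: field_simps)
    finally show "\<bar>shoot l1 x - shoot l2 x\<bar> < e"
      using power2_less_imp_less[of "\<bar>shoot l1 x - shoot l2 x\<bar>" e] \<open>0 < e\<close> by simp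
  qed
qed

lemma shoot_abs_le:
  assumes "\<bar>lam\<bar> \<le> R" "x \<in> {0..L}"
  shows "\<bar>shoot lam x\<bar> \<le> 1 + exp ((1 + (q_bound + R)) * L)"
  using shoot_sq_le[OF assms] sum_squares_bound[of "\<bar>shoot lam x\<bar>" 1] by simp

lemma shoot_pos_near_0:
  obtains d where "0 < d" "d \<le> L" "\<And>lam x. \<bar>lam\<bar> \<le> R \<Longrightarrow> 0 < x \<Longrightarrow> x \<le> d \<Longrightarrow> shoot lam x > 0"
proof -
  define B where "B = 1 + exp ((1 + (q_bound + R)) * L)"
  define C where "C = 2 * (\<bar>q_bound + R\<bar> + 1) * B"
  have "0 < B" by (simp add: B_def add_pos_pos)
  then have "0 < C" unfolding C_def by (intro mult_pos_pos) auto
  define d where "d = min L (1 / C)"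
  have "0 < d" "d \<le> L" using L_pos \<open>0 < C\<close> by (auto simp: d_def)
  moreover have "shoot lam x > 0" if lam: "\<bar>lam\<bar> \<le> R" and x: "0 < x" "x \<le> d" for lam x
  proof -
    have "C * x \<le> 1"
      using x \<open>0 < C\<close> by (simp add: d_def le_divide_eq mult.commute)
    moreover have "(q_bound + R) * B * x \<le> (\<bar>q_bound + R\<bar> + 1) * B * x"
      using \<open>0 < B\<close> x by (intro mult_right_mono) auto
    moreover have "C * x = 2 * ((\<bar>q_bound + R\<bar> + 1) * B * x)" by (simp add: C_def)
    ultimately have small: "(q_bound + R) * B * x \<le> 1 / 2" by linarith
    have "shoot lam x \<ge> x / 2"
    proof (rule ode_sol_ge_half_near_0[OF shoot_sol abs_coeff_le[OF lam] _ shoot_0 shoot'_0 x(1) _ small])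
      show "\<bar>shoot lam t\<bar> \<le> B" if "t \<in> {0..L}" for t
        using shoot_abs_le[OF lam that] by (simp add: B_def)
      show "x \<le> L" using x \<open>d \<le> L\<close> by simp
    qed
    then show ?thesis using x by simp
  qed
  ultimately show ?thesis by (rule that)
qed

lemma shoot_pos_of_very_negative:
  assumes "lam \<le> - (q_bound + 1)" "x \<in> {0<..L}"
  shows "shoot lam x > 0"
proof (rule ode_sol_pos_of_coeff_le_neg_one[OF shoot_sol _ abs_coeff_le[OF order_refl] shoot_0 shoot'_0 assms(2)])
  fix t assume "t \<in> {0..L}"
  then show "q t + lam \<le> -1" using abs_q_le_q_bound[of t] assms(1) by (simp add: abs_le_iff)
qed

context
  fixes \<Lambda> c
  assumes node: "c \<in> {0<..<L}" "shoot \<Lambda> c = 0"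
begin

definition positive_params :: "real set" where
  "positive_params = {lam. lam \<le> \<Lambda> \<and> (\<forall>x\<in>{0<..L}. shoot lam x > 0)}"

definition principal :: real where
  "principal = Sup positive_params"

lemma very_negative_in_positive_params: "- (q_bound + 1) \<in> positive_params"
proof -
  have "- (q_bound + 1) \<le> \<Lambda>"
  proof (rule ccontr)
    assume "\<not> - (q_bound + 1) \<le> \<Lambda>"
    then have "shoot \<Lambda> c > 0" using node(1) by (intro shoot_pos_of_very_negative) auto
    then show False using node(2) by simp
  qed
  moreover have "\<forall>x\<in>{0<..L}. shoot (- (q_bound + 1)) x > 0"
    using shoot_pos_of_very_negative[OF order_refl] by blast
  ultimately show ?thesis by (simp add: positive_params_def)
qed

lemma positive_params_bdd_above: "bdd_above positive_params"
  by (rule bdd_aboveI[of _ \<Lambda>]) (auto simp: positive_params_def)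

lemma principal_bounds: "- (q_bound + 1) \<le> principal" "principal \<le> \<Lambda>"
proof -
  show "- (q_bound + 1) \<le> principal"
    unfolding principal_def by (rule cSup_upper[OF very_negative_in_positive_params positive_params_bdd_above])
  show "principal \<le> \<Lambda>"
    unfolding principal_def
    by (rule cSup_least) (use very_negative_in_positive_params in \<open>auto simp: positive_params_def\<close>)
qed

lemma abs_le_near_principal:
  assumes "principal - 1 \<le> l" "l \<le> \<Lambda>"
  shows "\<bar>l\<bar> \<le> q_bound + 2 + \<bar>\<Lambda>\<bar>"
  unfolding abs_le_iff using assms principal_bounds abs_ge_self[of \<Lambda>] q_bound_nonneg
  by (intro conjI) linarith+

lemma shoot_principal_nonneg:
  assumes x: "x \<in> {0..L}"
  shows "shoot principal x \<ge> 0"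
proof (rule ccontr)
  define R where "R = q_bound + 2 + \<bar>\<Lambda>\<bar>"
  assume "\<not> shoot principal x \<ge> 0"
  then have neg: "shoot principal x < 0" by simp
  then have x': "x \<in> {0<..L}" using x shoot_0[of principal] by (cases "x = 0") auto
  have "0 < - shoot principal x" using neg by simp
  then obtain \<eta> where "0 < \<eta>" and close: "\<And>l1 l2 x'. \<bar>l1\<bar> \<le> R \<Longrightarrow> \<bar>l2\<bar> \<le> R \<Longrightarrow>
      \<bar>l1 - l2\<bar> < \<eta> \<Longrightarrow> x' \<in> {0..L} \<Longrightarrow> \<bar>shoot l1 x' - shoot l2 x'\<bar> < - shoot principal x"
    using shoot_uniformly_close[where R=R] by blast
  have "principal - min \<eta> 1 < Sup positive_params" using \<open>0 < \<eta>\<close> by (simp add: principal_def)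
  then obtain s where s: "s \<in> positive_params" "principal - min \<eta> 1 < s"
    using less_cSup_iff[OF _ positive_params_bdd_above] very_negative_in_positive_params by blast
  have "s \<le> principal"
    unfolding principal_def by (rule cSup_upper[OF s(1) positive_params_bdd_above])
  moreover have "min \<eta> 1 \<le> 1" by simp
  ultimately have "\<bar>s\<bar> \<le> R" "\<bar>principal\<bar> \<le> R" "\<bar>s - principal\<bar> < \<eta>"
    unfolding R_def using s(2) principal_bounds by (auto intro!: abs_le_near_principal)
  then have "\<bar>shoot s x - shoot principal x\<bar> < - shoot principal x" using close x by blast
  moreover have "shoot s x > 0" using s(1) x' by (simp add: positive_params_def)
  ultimately show False by simp
qed

lemma shoot_principal_pos:
  assumes x: "x \<in> {0<..<L}"
  shows "shoot principal x > 0"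
proof (rule ccontr)
  assume "\<not> shoot principal x > 0"
  then have "shoot principal x = 0" using shoot_principal_nonneg[of x] x by auto
  moreover have "shoot' principal x = 0"
    by (rule ode_sol_deriv_zero_at_interior_min[OF shoot_sol shoot_principal_nonneg x])
       (use \<open>shoot principal x = 0\<close> in auto)
  ultimately have "shoot' principal 0 = 0"
    using ode_sol_zero[OF shoot_sol abs_coeff_le[OF order_refl], where a=x and x=0] x by auto
  then show False by (simp add: shoot'_0)
qed

lemma principal_less: "principal < \<Lambda>"
proof -
  have "principal \<noteq> \<Lambda>" using shoot_principal_pos[OF node(1)] node(2) by auto
  then show ?thesis using principal_bounds(2) by simp
qed

text \<open>If \<open>shoot principal\<close> were positive at \<open>L\<close> it would be bounded below on \<open>(0, L]\<close> (near \<open>0\<close> uniformly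
  in the parameter), so slightly larger parameters would still belong to \<open>positive_params\<close>.\<close>

lemma shoot_principal_at_L: "shoot principal L = 0"
proof (rule ccontr)
  define R where "R = q_bound + 2 + \<bar>\<Lambda>\<bar>"
  assume "shoot principal L \<noteq> 0"
  then have pos: "shoot principal x > 0" if "x \<in> {0<..L}" for x
    using shoot_principal_pos[of x] shoot_principal_nonneg[of L] L_pos that by (cases "x = L") auto
  obtain d where d: "0 < d" "d \<le> L" and near: "\<And>lam x. \<bar>lam\<bar> \<le> R \<Longrightarrow> 0 < x \<Longrightarrow> x \<le> d \<Longrightarrow> shoot lam x > 0"
    using shoot_pos_near_0[where R=R] by blast
  have "continuous_on {d..L} (shoot principal)"
    by (rule continuous_on_subset[OF ode_sol_continuous(1)[OF shoot_sol]]) (use d in auto)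
  moreover have "{d..L} \<noteq> {}" using d by auto
  ultimately obtain xm where xm: "xm \<in> {d..L}" and min: "\<forall>y\<in>{d..L}. shoot principal xm \<le> shoot principal y"
    using continuous_attains_inf[OF compact_Icc] by blast
  have "shoot principal xm > 0" using pos xm d by auto
  then obtain \<eta> where "0 < \<eta>" and close: "\<And>l1 l2 x. \<bar>l1\<bar> \<le> R \<Longrightarrow> \<bar>l2\<bar> \<le> R \<Longrightarrow>
      \<bar>l1 - l2\<bar> < \<eta> \<Longrightarrow> x \<in> {0..L} \<Longrightarrow> \<bar>shoot l1 x - shoot l2 x\<bar> < shoot principal xm"
    using shoot_uniformly_close[where R=R] by blast
  define l' where "l' = principal + min \<eta> (\<Lambda> - principal) / 2"
  have l': "principal < l'" "l' \<le> \<Lambda>" "\<bar>l' - principal\<bar> < \<eta>"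
    using \<open>0 < \<eta>\<close> principal_less by (auto simp: l'_def min_def field_simps)
  have "\<bar>l'\<bar> \<le> R" "\<bar>principal\<bar> \<le> R"
    unfolding R_def using l' principal_bounds by (auto intro!: abs_le_near_principal)
  have "shoot l' x > 0" if x: "x \<in> {0<..L}" for x
  proof (cases "x \<le> d")
    case True
    then show ?thesis using near[OF \<open>\<bar>l'\<bar> \<le> R\<close>] x by auto
  next
    case False
    then have "x \<in> {d..L}" using x by auto
    then have "\<bar>shoot l' x - shoot principal x\<bar> < shoot principal xm" "shoot principal xm \<le> shoot principal x"
      using close[OF \<open>\<bar>l'\<bar> \<le> R\<close> \<open>\<bar>principal\<bar> \<le> R\<close> l'(3)] min d by auto
    then show ?thesis by simp
  qed
  then have "l' \<in> positive_params" using l'(2) by (simp add: positive_params_def)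
  then have "l' \<le> principal"
    unfolding principal_def by (rule cSup_upper[OF _ positive_params_bdd_above])
  then show False using l'(1) by simp
qed

lemma principal_le_eigenvalue:
  assumes "sl_dirichlet_eigenvalue q L l"
  shows "principal \<le> l"
proof (rule ccontr)
  assume "\<not> principal \<le> l"
  have "shoot l L = 0" using assms by (simp add: eigenvalue_iff_shoot)
  obtain x where x: "x \<in> {0..L}" "shoot l x \<noteq> 0" using shoot_not_identically_zero by blast
  obtain a b where ab: "0 \<le> a" "a < x" "x < b" "b \<le> L" "shoot l a = 0" "shoot l b = 0"
      "\<forall>y\<in>{a<..<b}. shoot l y \<noteq> 0"
    using nodal_interval[OF ode_sol_continuous(1)[OF shoot_sol] shoot_0 \<open>shoot l L = 0\<close> x] by blast
  have "\<exists>z\<in>{a<..<b}. shoot principal z = 0"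
    by (rule sturm_comparison[OF shoot_sol shoot_sol _ ab(1) _ ab(4-6)]) (use ab \<open>\<not> principal \<le> l\<close> in auto)
  then obtain z where "z \<in> {a<..<b}" "shoot principal z = 0" by blast
  moreover have "z \<in> {0<..<L}" using calculation(1) ab by auto
  ultimately show False using shoot_principal_pos[of z] by simp
qed

end

theorem principal_eigenvalue:
  assumes "c \<in> {0<..<L}" "shoot \<Lambda> c = 0"
  shows "\<exists>l0. l0 < \<Lambda> \<and> shoot l0 L = 0 \<and> (\<forall>x\<in>{0<..<L}. shoot l0 x > 0)
           \<and> (\<forall>l. sl_dirichlet_eigenvalue q L l \<longrightarrow> l0 \<le> l)"
  using principal_less[OF assms] shoot_principal_at_L[OF assms] shoot_principal_pos[OF assms]
    principal_le_eigenvalue[OF assms] by blast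

text \<open>Below the parameter of a solution with a single interior node, an eigenfunction cannot have an
  interior node (each of its nodal intervals would contain that node), and then Sturm comparison
  with the principal eigenfunction forces the eigenvalue down to the principal one.\<close>

lemma eigenvalue_below_one_node:
  assumes l0: "shoot l0 L = 0" "\<And>x. x \<in> {0<..<L} \<Longrightarrow> shoot l0 x > 0"
    and v: "ode_sol (\<lambda>x. q x + m) L v v'" "\<And>x. x \<in> {0<..<L} \<Longrightarrow> v x = 0 \<longleftrightarrow> x = z"
    and l: "sl_dirichlet_eigenvalue q L l" "l0 \<le> l" "l < m"
  shows "l = l0"
proof -
  have "shoot l L = 0" using l(1) by (simp add: eigenvalue_iff_shoot)
  have no_node: "shoot l y \<noteq> 0" if y: "y \<in> {0<..<L}" for y
  proof
    assume "shoot l y = 0"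
    obtain x where x: "x \<in> {0..L}" "shoot l x \<noteq> 0" using shoot_not_identically_zero by blast
    obtain a1 b1 a2 b2 where ab: "0 \<le> a1" "a1 < b1" "b1 \<le> a2" "a2 < b2" "b2 \<le> L"
        "shoot l a1 = 0" "shoot l b1 = 0" "\<forall>y\<in>{a1<..<b1}. shoot l y \<noteq> 0"
        "shoot l a2 = 0" "shoot l b2 = 0" "\<forall>y\<in>{a2<..<b2}. shoot l y \<noteq> 0"
      by (rule two_nodal_intervals[OF shoot_sol abs_coeff_le[OF order_refl] shoot_0 \<open>shoot l L = 0\<close> x y
            \<open>shoot l y = 0\<close>])
    have "\<exists>c\<in>{a1<..<b1}. v c = 0"
      by (rule sturm_comparison[OF shoot_sol v(1) l(3)]) (use ab in auto)
    then have "z \<in> {a1<..<b1}" using v(2) ab by force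
    moreover have "\<exists>c\<in>{a2<..<b2}. v c = 0"
      by (rule sturm_comparison[OF shoot_sol v(1) l(3)]) (use ab in auto)
    then have "z \<in> {a2<..<b2}" using v(2) ab by force
    ultimately show False using ab(3) by simp
  qed
  have "\<not> l0 < l"
  proof
    assume "l0 < l"
    have "\<exists>c\<in>{0<..<L}. shoot l c = 0"
      by (rule sturm_comparison[OF shoot_sol shoot_sol \<open>l0 < l\<close> order_refl L_pos order_refl shoot_0 l0(1)])
         (use l0(2) in force)
    then show False using no_node by blast
  qed
  then show ?thesis using l(2) by simp
qed

lemma eigenfunction_symmetric:
  assumes sym: "\<And>x. x \<in> {0..L} \<Longrightarrow> q (L - x) = q x"
    and u: "sl_dirichlet_eigenfunction q L l u" and mid: "shoot l (L / 2) \<noteq> 0"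
    and du: "\<forall>x\<in>{0..L}. (u has_real_derivative u' x) (at x within {0..L})" and x: "x \<in> {0..L}"
  shows "u (L - x) = u x" "u' (L - x) = - u' x"
proof -
  have "shoot l L = 0"
    using u by (auto simp: eigenvalue_iff_shoot[symmetric] sl_dirichlet_eigenvalue_def)
  have shoot_sym: "shoot l (L - y) = shoot l y" if y: "y \<in> {0..L}" for y
  proof -
    have refl: "shoot l (L - y) = - shoot' l L * shoot l y" if "y \<in> {0..L}" for y
      using ode_sol_eq_scaled_shoot[OF ode_sol_reflect[OF shoot_sol] _ that] sym \<open>shoot l L = 0\<close>
      by (simp add: algebra_simps)
    have "shoot l (L / 2) = - shoot' l L * shoot l (L / 2)" using refl[of "L / 2"] L_pos by simp
    then have "(1 + shoot' l L) * shoot l (L / 2) = 0" by (simp only: distrib_right mult_1)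
    then have "- shoot' l L = 1" using mid by simp
    then show ?thesis using refl[OF y] by simp
  qed
  obtain k where k: "\<And>y. y \<in> {0..L} \<Longrightarrow> u y = k * shoot l y"
    using eigenfunction_eq_scaled_shoot[OF u] by blast
  have u_sym: "u (L - y) = u y" if "y \<in> {0..L}" for y
  proof -
    have "L - y \<in> {0..L}" using that by auto
    then show ?thesis using k[OF that] k[of "L - y"] shoot_sym[OF that] by simp
  qed
  then show "u (L - x) = u x" using x .
  have "((\<lambda>y. u (L - y)) has_real_derivative - u' (L - x)) (at x within {0..L})"
    by (rule has_real_derivative_reflect) (use du x in auto)
  then have "(u has_real_derivative - u' (L - x)) (at x within {0..L})"
    by (rule has_field_derivative_transform_within[OF _ zero_less_one x]) (simp add: u_sym)
  then have "- u' (L - x) = u' x"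
    using has_real_derivative_unique_within_Icc[OF L_pos x] du x by blast
  then show "u' (L - x) = - u' x" by simp
qed

theorem spectrum_with_one_node_zero_mode:
  assumes sym: "\<And>x. x \<in> {0..L} \<Longrightarrow> q (L - x) = q x"
    and u: "ode_sol (\<lambda>x. q x + 0) L u u'" "u 0 = 0" "u L = 0"
    and node: "\<And>x. x \<in> {0<..<L} \<Longrightarrow> u x = 0 \<longleftrightarrow> x = L / 2"
  shows "sl_dirichlet_eigenfunction q L 0 u
       \<and> card {l. sl_dirichlet_eigenvalue q L l \<and> l < 0} = 1
       \<and> (\<exists>l0. sl_dirichlet_eigenvalue q L l0
              \<and> (\<forall>l. sl_dirichlet_eigenvalue q L l \<longrightarrow> l0 \<le> l)
              \<and> l0 < 0
              \<and> (\<forall>u0 u0'. sl_dirichlet_eigenfunction q L l0 u0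
                   \<and> (\<forall>x\<in>{0..L}. (u0 has_real_derivative u0' x) (at x within {0..L}))
                   \<longrightarrow> (\<forall>x\<in>{0..L}. u0 x = u0 (L - x)
                         \<and> u0' (L - x) = - u0' x
                         \<and> u0 (L - x) * u0' (L - x) = - (u0 x * u0' x))))"
proof -
  have mid: "L / 2 \<in> {0<..<L}" using L_pos by simp
  have "u (L / 4) \<noteq> 0" using node[of "L / 4"] L_pos by simp
  then have eig0: "sl_dirichlet_eigenfunction q L 0 u"
    using u L_pos by (auto simp: eigenfunction_iff_ode_sol intro!: bexI[of _ "L / 4"])
  have "u' 0 \<noteq> 0" using ode_sol_eq_scaled_shoot[OF u(1,2)] \<open>u (L / 4) \<noteq> 0\<close> L_pos by force
  then have "shoot 0 (L / 2) = 0" using ode_sol_eq_scaled_shoot[OF u(1,2)] node[OF mid] L_pos by simp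
  then obtain l0 where l0: "l0 < 0" "shoot l0 L = 0" "\<forall>x\<in>{0<..<L}. shoot l0 x > 0"
    and minimal: "\<forall>l. sl_dirichlet_eigenvalue q L l \<longrightarrow> l0 \<le> l"
    using principal_eigenvalue[OF mid] by blast
  have ev0: "sl_dirichlet_eigenvalue q L l0" using l0(2) by (simp add: eigenvalue_iff_shoot)
  have "l = l0" if "sl_dirichlet_eigenvalue q L l" "l < 0" for l
    using eigenvalue_below_one_node[OF l0(2) l0(3)[rule_format] u(1) node that(1) _ that(2)] minimal that(1)
    by blast
  then have negative: "{l. sl_dirichlet_eigenvalue q L l \<and> l < 0} = {l0}" using ev0 l0(1) by blast
  show ?thesis
  proof (intro conjI exI[of _ l0] allI impI ballI)
    fix u0 u0' x
    assume "sl_dirichlet_eigenfunction q L l0 u0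
      \<and> (\<forall>x\<in>{0..L}. (u0 has_real_derivative u0' x) (at x within {0..L}))" and x: "x \<in> {0..L}"
    then have u0: "sl_dirichlet_eigenfunction q L l0 u0"
      "\<forall>x\<in>{0..L}. (u0 has_real_derivative u0' x) (at x within {0..L})" by blast+
    have "shoot l0 (L / 2) \<noteq> 0" using l0(3)[rule_format, OF mid] by simp
    then have "u0 (L - x) = u0 x" "u0' (L - x) = - u0' x"
      using eigenfunction_symmetric[OF sym u0(1) _ u0(2) x] by blast+
    then show "u0 x = u0 (L - x)" "u0' (L - x) = - u0' x" "u0 (L - x) * u0' (L - x) = - (u0 x * u0' x)"
      by simp_all
  qed (use eig0 negative ev0 minimal l0(1) in auto)
qed

end

section \<open>Velocity integrals of the equilibrium profile\<close>

lemma integrable_const_div_1_plus_square: "(\<lambda>v::real. D / (1 + v\<^sup>2)) integrable_on UNIV"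
proof -
  have "set_integrable lborel (einterval (-\<infinity>) \<infinity>) (\<lambda>x::real. inverse (1 + x^2))"
    by (rule integrable_inverse_1_plus_square)
  then have "(\<lambda>x::real. inverse (1 + x^2)) integrable_on UNIV"
    by (intro integrable_on_lborel) (simp add: set_integrable_def einterval_iff)
  then show ?thesis
    using integrable_on_mult_right[of _ UNIV D] by (simp add: divide_inverse)
qed

lemma decay_powr_imp_decay:
  fixes f :: "real \<Rightarrow> real" and \<gamma> C :: real
  assumes "1 \<le> \<gamma>" "0 < C" "\<bar>f y\<bar> \<le> C / (1 + \<bar>y\<bar> powr \<gamma>)"
  shows "\<bar>f y\<bar> \<le> 2 * C / (1 + \<bar>y\<bar>)"
proof (cases "\<bar>y\<bar> \<ge> 1")
  case True
  then have "\<bar>y\<bar> \<le> \<bar>y\<bar> powr \<gamma>" using powr_mono[of 1 \<gamma> "\<bar>y\<bar>"] assms(1) by simp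
  then have "C / (1 + \<bar>y\<bar> powr \<gamma>) \<le> C / (1 + \<bar>y\<bar>)"
    using assms(2) by (intro divide_left_mono) (auto simp: add_pos_nonneg)
  also have "\<dots> \<le> 2 * C / (1 + \<bar>y\<bar>)" using assms(2) by (intro divide_right_mono) auto
  finally show ?thesis using assms(3) by linarith
next
  case False
  have "C / (1 + \<bar>y\<bar> powr \<gamma>) \<le> C / 1"
    using assms(2) by (intro divide_left_mono) (auto simp: add_pos_nonneg)
  also have "\<dots> = 2 * C / 2" by simp
  also have "\<dots> \<le> 2 * C / (1 + \<bar>y\<bar>)" using assms(2) False by (intro divide_left_mono) auto
  finally show ?thesis using assms(3) by linarith
qed

locale energy_profile =
  fixes mu mu' :: "real \<Rightarrow> real" and C :: real
  assumes mu_deriv: "\<And>y. (mu has_real_derivative mu' y) (at y)"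
    and mu'_cont: "continuous_on UNIV mu'"
    and mu'_decay: "\<And>y. \<bar>mu' y\<bar> \<le> C / (1 + \<bar>y\<bar>)"
    and mu_integrable: "(\<lambda>v. mu (v\<^sup>2 / 2)) integrable_on UNIV"
begin

definition density :: "real \<Rightarrow> real" where
  "density s = integral UNIV (\<lambda>v. mu (v\<^sup>2 / 2 + s))"

definition density' :: "real \<Rightarrow> real" where
  "density' s = integral UNIV (\<lambda>v. mu' (v\<^sup>2 / 2 + s))"

text \<open>An integrable majorant of \<open>v \<mapsto> \<bar>mu' (v\<^sup>2 / 2 + s)\<bar>\<close>, uniform in \<open>\<bar>s\<bar> \<le> R\<close>, comes from
  \<open>1 + v\<^sup>2 \<le> 2 (1 + R) (1 + \<bar>v\<^sup>2 / 2 + s\<bar>)\<close>.\<close>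

lemma abs_mu'_le_majorant:
  assumes "\<bar>s\<bar> \<le> R"
  shows "\<bar>mu' (v\<^sup>2 / 2 + s)\<bar> \<le> 2 * C * (1 + R) / (1 + v\<^sup>2)"
proof -
  define y where "y = v\<^sup>2 / 2 + s"
  have "0 \<le> C" using mu'_decay[of 0] by (simp add: order.trans[OF abs_ge_zero])
  have "\<bar>y\<bar> \<ge> v\<^sup>2 / 2 - R" "0 \<le> R" using assms by (auto simp: y_def)
  moreover from this(2) have "0 \<le> R * \<bar>y\<bar>" by simp
  ultimately have "1 + v\<^sup>2 \<le> 2 + 2 * R + 2 * \<bar>y\<bar> + 2 * (R * \<bar>y\<bar>)" by linarith
  also have "\<dots> = 2 * (1 + R) * (1 + \<bar>y\<bar>)" by (simp add: algebra_simps)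
  finally have "1 + v\<^sup>2 \<le> 2 * (1 + R) * (1 + \<bar>y\<bar>)" .
  then have "C * (1 + v\<^sup>2) \<le> C * (2 * (1 + R) * (1 + \<bar>y\<bar>))"
    using \<open>0 \<le> C\<close> by (rule mult_left_mono)
  then have "C * (1 + v\<^sup>2) \<le> 2 * C * (1 + R) * (1 + \<bar>y\<bar>)" by (simp only: mult_ac)
  moreover have pos: "0 < 1 + \<bar>y\<bar>" "0 < 1 + v\<^sup>2" by (auto simp: add_pos_nonneg)
  ultimately have "C * (1 + v\<^sup>2) / (1 + \<bar>y\<bar>) \<le> 2 * C * (1 + R)" by (simp add: pos_divide_le_eq)
  then have "C / (1 + \<bar>y\<bar>) \<le> 2 * C * (1 + R) / (1 + v\<^sup>2)" using pos by (simp add: pos_le_divide_eq)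
  then show ?thesis using mu'_decay[of y] by (simp add: y_def)
qed

lemma mu_continuous: "continuous_on UNIV mu"
  using mu_deriv by (intro DERIV_continuous_on) (auto intro: has_field_derivative_at_within)

lemma mu_lipschitz:
  assumes "\<bar>s\<bar> \<le> R" "\<bar>t\<bar> \<le> R"
  shows "\<bar>mu (v\<^sup>2 / 2 + s) - mu (v\<^sup>2 / 2 + t)\<bar> \<le> 2 * C * (1 + R) / (1 + v\<^sup>2) * \<bar>s - t\<bar>"
proof -
  have "norm (mu (v\<^sup>2 / 2 + s) - mu (v\<^sup>2 / 2 + t))
      \<le> 2 * C * (1 + R) / (1 + v\<^sup>2) * norm ((v\<^sup>2 / 2 + s) - (v\<^sup>2 / 2 + t))"
  proof (rule field_differentiable_bound[where S="{v\<^sup>2 / 2 - R .. v\<^sup>2 / 2 + R}" and f'=mu'])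
    fix z assume z: "z \<in> {v\<^sup>2 / 2 - R .. v\<^sup>2 / 2 + R}"
    show "(mu has_field_derivative mu' z) (at z within {v\<^sup>2 / 2 - R .. v\<^sup>2 / 2 + R})"
      using mu_deriv by (rule has_field_derivative_at_within)
    have "\<bar>z - v\<^sup>2 / 2\<bar> \<le> R" using z by auto
    from abs_mu'_le_majorant[OF this, of v] show "norm (mu' z) \<le> 2 * C * (1 + R) / (1 + v\<^sup>2)" by simp
  qed (use assms in auto)
  then show ?thesis by simp
qed

lemma continuous_imp_lebesgue_measurable:
  "continuous_on UNIV (f :: real \<Rightarrow> real) \<Longrightarrow> f \<in> borel_measurable (lebesgue_on UNIV)"
  using continuous_imp_measurable_on_sets_lebesgue[of UNIV f] by simp

lemma mu'_integrable: "(\<lambda>v. mu' (v\<^sup>2 / 2 + s)) integrable_on UNIV"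
proof (rule measurable_bounded_by_integrable_imp_integrable_real[where g="\<lambda>v. 2 * C * (1 + \<bar>s\<bar>) / (1 + v\<^sup>2)"])
  show "(\<lambda>v. mu' (v\<^sup>2 / 2 + s)) \<in> borel_measurable (lebesgue_on UNIV)"
    by (intro continuous_imp_lebesgue_measurable continuous_on_compose2[OF mu'_cont] continuous_intros) auto
qed (auto intro: integrable_const_div_1_plus_square abs_mu'_le_majorant)

lemma mu_integrable_shifted: "(\<lambda>v. mu (v\<^sup>2 / 2 + s)) integrable_on UNIV"
proof -
  have "(\<lambda>v. mu (v\<^sup>2 / 2 + s) - mu (v\<^sup>2 / 2 + 0)) integrable_on UNIV"
  proof (rule measurable_bounded_by_integrable_imp_integrable_real
      [where g="\<lambda>v. 2 * C * (1 + \<bar>s\<bar>) * \<bar>s\<bar> / (1 + v\<^sup>2)"])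
    show "(\<lambda>v. mu (v\<^sup>2 / 2 + s) - mu (v\<^sup>2 / 2 + 0)) \<in> borel_measurable (lebesgue_on UNIV)"
      by (intro continuous_imp_lebesgue_measurable continuous_intros continuous_on_compose2[OF mu_continuous]) auto
    show "\<bar>mu (v\<^sup>2 / 2 + s) - mu (v\<^sup>2 / 2 + 0)\<bar> \<le> 2 * C * (1 + \<bar>s\<bar>) * \<bar>s\<bar> / (1 + v\<^sup>2)" for v
      using mu_lipschitz[of s "\<bar>s\<bar>" 0 v] by simp
  qed (auto intro: integrable_const_div_1_plus_square)
  from integrable_add[OF this mu_integrable] show ?thesis by simp
qed

lemma isCont_density': "isCont density' s"
  unfolding continuous_at_sequentially comp_def
proof (intro allI impI)
  fix X assume X: "X \<longlonglongrightarrow> s"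
  obtain K where K: "K > 0" "\<And>n. norm (X n) \<le> K"
    using convergent_imp_Bseq[OF convergentI[OF X]] by (auto elim: BseqE)
  have "(\<lambda>n. integral UNIV (\<lambda>v. mu' (v\<^sup>2 / 2 + X n))) \<longlonglongrightarrow> integral UNIV (\<lambda>v. mu' (v\<^sup>2 / 2 + s))"
  proof (rule dominated_convergence(2)[where h="\<lambda>v. 2 * C * (1 + K) / (1 + v\<^sup>2)"])
    show "norm (mu' (v\<^sup>2 / 2 + X n)) \<le> 2 * C * (1 + K) / (1 + v\<^sup>2)" for n v
      using abs_mu'_le_majorant[of "X n" K v] K(2) by simp
    show "(\<lambda>n. mu' (v\<^sup>2 / 2 + X n)) \<longlonglongrightarrow> mu' (v\<^sup>2 / 2 + s)" for v
      by (intro continuous_on_tendsto_compose[OF mu'_cont] tendsto_intros X) auto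
  qed (auto intro: mu'_integrable integrable_const_div_1_plus_square)
  then show "(\<lambda>n. density' (X n)) \<longlonglongrightarrow> density' s" by (simp add: density'_def)
qed

text \<open>Differentiation under the integral sign, dominated by the majorant of \<open>mu'\<close> via the mean value
  bound \<open>mu_lipschitz\<close>.\<close>

lemma density_has_derivative: "(density has_real_derivative density' s) (at s)"
  unfolding DERIV_def tendsto_at_iff_sequentially comp_def
proof (intro allI impI)
  fix X :: "nat \<Rightarrow> real" assume X0: "\<forall>i. X i \<in> UNIV - {0}" and X: "X \<longlonglongrightarrow> 0"
  obtain K where K: "K > 0" "\<And>n. norm (X n) \<le> K"
    using convergent_imp_Bseq[OF convergentI[OF X]] by (auto elim: BseqE)
  define R where "R = \<bar>s\<bar> + K"
  define f where "f n v = (mu (v\<^sup>2 / 2 + (s + X n)) - mu (v\<^sup>2 / 2 + s)) / X n" for n v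
  have "(\<lambda>n. integral UNIV (f n)) \<longlonglongrightarrow> integral UNIV (\<lambda>v. mu' (v\<^sup>2 / 2 + s))"
  proof (rule dominated_convergence(2)[where h="\<lambda>v. 2 * C * (1 + R) / (1 + v\<^sup>2)"])
    show "f n integrable_on UNIV" for n
      unfolding f_def by (intro integrable_on_divide integrable_diff mu_integrable_shifted)
    show "norm (f n v) \<le> 2 * C * (1 + R) / (1 + v\<^sup>2)" for n v
    proof -
      have "\<bar>s + X n\<bar> \<le> R" "\<bar>s\<bar> \<le> R"
        using abs_triangle_ineq[of s "X n"] K(2)[of n] by (auto simp: R_def)
      from mu_lipschitz[OF this, of v] have
        "\<bar>mu (v\<^sup>2 / 2 + (s + X n)) - mu (v\<^sup>2 / 2 + s)\<bar> \<le> 2 * C * (1 + R) / (1 + v\<^sup>2) * \<bar>X n\<bar>"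
        by simp
      moreover have "\<bar>X n\<bar> > 0" using X0 by auto
      ultimately show ?thesis by (simp add: f_def abs_divide divide_le_eq)
    qed
    show "(\<lambda>n. f n v) \<longlonglongrightarrow> mu' (v\<^sup>2 / 2 + s)" for v
    proof -
      have "((\<lambda>h. (mu (v\<^sup>2 / 2 + s + h) - mu (v\<^sup>2 / 2 + s)) / h) \<longlongrightarrow> mu' (v\<^sup>2 / 2 + s)) (at 0)"
        using mu_deriv[of "v\<^sup>2 / 2 + s"] unfolding DERIV_def .
      then show ?thesis
        unfolding tendsto_at_iff_sequentially comp_def f_def using X0 X by (simp add: add.assoc)
    qed
  qed (auto intro: integrable_const_div_1_plus_square)
  moreover have "(density (s + X n) - density s) / X n = integral UNIV (f n)" for n
    unfolding density_def f_def by (simp add: integral_diff mu_integrable_shifted)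
  ultimately show "(\<lambda>n. (density (s + X n) - density s) / X n) \<longlonglongrightarrow> density' s"
    by (simp add: density'_def)
qed

end

lemma (in energy_profile) field_equation_deriv:
  assumes "\<And>x. (phi has_real_derivative phi' x) (at x)" and "\<And>x. phi'' x = 1 - density (phi x)"
  shows "(phi'' has_real_derivative - density' (phi x) * phi' x) (at x)"
proof -
  have "((\<lambda>x. 1 - density (phi x)) has_real_derivative 0 - density' (phi x) * phi' x) (at x)"
    by (intro DERIV_diff DERIV_const DERIV_chain2[OF density_has_derivative assms(1)])
  moreover have "phi'' = (\<lambda>x. 1 - density (phi x))" using assms(2) by auto
  ultimately show ?thesis by simp
qed

section \<open>Critical points of a unimodal function\<close>

lemma deriv_nonpos_of_strict_decreasing:
  fixes f :: "real \<Rightarrow> real"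
  assumes "DERIV f x :> D" "x \<in> {a<..<b}"
    and dec: "\<And>y z. y \<in> {a..b} \<Longrightarrow> z \<in> {a..b} \<Longrightarrow> y < z \<Longrightarrow> f z < f y"
  shows "D \<le> 0"
proof (rule ccontr)
  assume "\<not> D \<le> 0"
  then obtain d where d: "d > 0" "\<forall>h>0. h < d \<longrightarrow> f x < f (x + h)"
    using DERIV_pos_inc_right[OF assms(1)] by force
  define h where "h = min (d / 2) ((b - x) / 2)"
  have "0 < h" "h < d" "h \<le> (b - x) / 2" using d assms(2) by (auto simp: h_def min_def)
  then show False using d dec[of x "x + h"] assms(2) by auto
qed

lemma deriv_nonneg_of_strict_increasing:
  fixes f :: "real \<Rightarrow> real"
  assumes "DERIV f x :> D" "x \<in> {a<..<b}"
    and inc: "\<And>y z. y \<in> {a..b} \<Longrightarrow> z \<in> {a..b} \<Longrightarrow> y < z \<Longrightarrow> f y < f z"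
  shows "D \<ge> 0"
  using deriv_nonpos_of_strict_decreasing[OF DERIV_minus[OF assms(1)] assms(2)] inc by force

lemma deriv2_zero_at_critical_point:
  fixes f f' :: "real \<Rightarrow> real"
  assumes f: "\<And>x. DERIV f x :> f' x" and f': "DERIV f' c :> D"
    and dec: "\<And>x y. x \<in> {a..m} \<Longrightarrow> y \<in> {a..m} \<Longrightarrow> x < y \<Longrightarrow> f y < f x"
    and inc: "\<And>x y. x \<in> {m..b} \<Longrightarrow> y \<in> {m..b} \<Longrightarrow> x < y \<Longrightarrow> f x < f y"
    and c: "c \<in> {a<..<b}" "c \<noteq> m" "f' c = 0"
  shows "D = 0"
proof (cases "c < m")
  case True
  have "f' t \<le> 0" if "t \<in> {a<..<m}" for t
    using deriv_nonpos_of_strict_decreasing[OF f that dec] .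
  then show ?thesis
    by (intro DERIV_local_max[OF f', of "min (c - a) (m - c)"]) (use c True in \<open>auto simp: abs_less_iff\<close>)
next
  case False
  then have "m < c" using c(2) by simp
  have "f' t \<ge> 0" if "t \<in> {m<..<b}" for t
    using deriv_nonneg_of_strict_increasing[OF f that inc] .
  then show ?thesis
    by (intro DERIV_local_min[OF f', of "min (c - m) (b - c)"]) (use c \<open>m < c\<close> in \<open>auto simp: abs_less_iff\<close>)
qed

text \<open>A further critical point would be a double zero of \<open>f'\<close>, making it vanish identically.\<close>

lemma deriv_zero_iff_minimum_point:
  fixes f f' f'' :: "real \<Rightarrow> real"
  assumes f: "\<And>x. DERIV f x :> f' x" "\<And>x. DERIV f' x :> f'' x"
    and s: "ode_sol g L f' f''" and M: "\<And>t. t \<in> {0..L} \<Longrightarrow> \<bar>g t\<bar> \<le> M"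
    and dec: "\<And>x y. x \<in> {0..m} \<Longrightarrow> y \<in> {0..m} \<Longrightarrow> x < y \<Longrightarrow> f y < f x"
    and inc: "\<And>x y. x \<in> {m..L} \<Longrightarrow> y \<in> {m..L} \<Longrightarrow> x < y \<Longrightarrow> f x < f y"
    and m: "m \<in> {0<..<L}" and c: "c \<in> {0<..<L}"
  shows "f' c = 0 \<longleftrightarrow> c = m"
proof
  assume "c = m"
  have "\<forall>y. \<bar>m - y\<bar> < min m (L - m) \<longrightarrow> f m \<le> f y"
  proof (intro allI impI)
    fix y assume "\<bar>m - y\<bar> < min m (L - m)"
    then show "f m \<le> f y"
      using dec[of y m] inc[of m y] by (cases y m rule: linorder_cases) (auto simp: abs_less_iff)
  qed
  then show "f' c = 0"
    unfolding \<open>c = m\<close> by (rule DERIV_local_min[OF f(1), rotated]) (use m in auto)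
next
  assume "f' c = 0"
  show "c = m"
  proof (rule ccontr)
    assume "c \<noteq> m"
    have "f'' c = 0" by (rule deriv2_zero_at_critical_point[OF f(1) f(2) dec inc c \<open>c \<noteq> m\<close> \<open>f' c = 0\<close>])
    then have "f' x = 0" if "x \<in> {0..L}" for x
      using ode_sol_zero[OF s M, of c x] c \<open>f' c = 0\<close> that by auto
    moreover obtain z where "0 < z" "z < m" "f m - f 0 = (m - 0) * f' z"
      using MVT2[of 0 m f f'] f(1) m by auto
    ultimately have "f m = f 0" using m by simp
    then show False using dec[of 0 m] m by simp
  qed
qed

theorem mainTheorem5:
  fixes mu mu' :: "real \<Rightarrow> real"
    and phi phi' phi'' :: "real \<Rightarrow> real"
    and P :: real
    and q :: "real \<Rightarrow> real"
  assumes mu_deriv: "\<And>y. (mu has_real_derivative mu' y) (at y)"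
    and mu'_cont: "continuous_on UNIV mu'"
    and mu_nonneg: "\<And>y. mu y \<ge> 0"
    and mu_norm: "((\<lambda>v. mu (v\<^sup>2 / 2)) has_integral 1) UNIV"
    and mu'_decay: "\<exists>\<gamma> C. \<gamma> > 1 \<and> C > 0 \<and>
                      (\<forall>y. \<bar>mu' y\<bar> \<le> C / (1 + \<bar>y\<bar> powr \<gamma>))"
    and phi_deriv: "\<And>x. (phi has_real_derivative phi' x) (at x)"
    and phi'_deriv: "\<And>x. (phi' has_real_derivative phi'' x) (at x)"
    and phi_eq: "\<And>x. phi'' x = 1 - integral UNIV (\<lambda>v. mu (v\<^sup>2 / 2 + phi x))"
    and phi_nonconst: "\<not> (\<exists>c. \<forall>x. phi x = c)"
    and P_pos: "P > 0"
    and P_period: "\<And>x. phi (x + P) = phi x"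
    and P_minimal: "\<And>p. 0 < p \<Longrightarrow> p < P \<Longrightarrow> \<not> (\<forall>x. phi (x + p) = phi x)"
    and phi_max: "\<And>x. phi x \<le> phi 0"
    and phi_P: "phi P = phi 0"
    and phi_min: "\<And>x. phi (P / 2) \<le> phi x"
    and phi_sym: "\<And>x. x \<in> {0..P} \<Longrightarrow> phi x = phi (P - x)"
    and phi_decr: "\<And>x y. x \<in> {0..P/2} \<Longrightarrow> y \<in> {0..P/2} \<Longrightarrow> x < y \<Longrightarrow> phi y < phi x"
    and q_def: "\<And>x. q x = integral UNIV (\<lambda>v. mu' (v\<^sup>2 / 2 + phi x))"
  shows "sl_dirichlet_eigenfunction q P 0 phi'
       \<and> card {l. sl_dirichlet_eigenvalue q P l \<and> l < 0} = 1
       \<and> (\<exists>l0. sl_dirichlet_eigenvalue q P l0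
              \<and> (\<forall>l. sl_dirichlet_eigenvalue q P l \<longrightarrow> l0 \<le> l)
              \<and> l0 < 0
              \<and> (\<forall>u0 u0'. sl_dirichlet_eigenfunction q P l0 u0
                   \<and> (\<forall>x\<in>{0..P}. (u0 has_real_derivative u0' x) (at x within {0..P}))
                   \<longrightarrow> (\<forall>x\<in>{0..P}. u0 x = u0 (P - x)
                         \<and> u0' (P - x) = - u0' x
                         \<and> u0 (P - x) * u0' (P - x) = - (u0 x * u0' x))))"
proof -
  obtain \<gamma> C where "1 < \<gamma>" "0 < C" "\<And>y. \<bar>mu' y\<bar> \<le> C / (1 + \<bar>y\<bar> powr \<gamma>)" using mu'_decay by blast
  then interpret energy_profile mu mu' "2 * C"
    using mu_deriv mu'_cont has_integral_integrable[OF mu_norm] decay_powr_imp_decay[of \<gamma> C mu']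
    by unfold_locales auto
  have q_eq: "q x = density' (phi x)" for x by (simp add: q_def density'_def)
  have "continuous_on {0..P} q"
    unfolding q_eq by (intro continuous_at_imp_continuous_on ballI isCont_o2[OF DERIV_isCont[OF phi_deriv] isCont_density'])
  then interpret dirichlet_problem q P using P_pos by unfold_locales
  have sol: "ode_sol (\<lambda>x. q x + 0) P phi' phi''"
    using field_equation_deriv[OF phi_deriv, of phi''] phi_eq phi'_deriv
    by (auto simp: ode_sol_def q_eq density_def intro: has_field_derivative_at_within)
  have inc: "phi x < phi y" if "x \<in> {P/2..P}" "y \<in> {P/2..P}" "x < y" for x y
    using phi_decr[of "P - y" "P - x"] phi_sym[of x] phi_sym[of y] that P_pos by auto
  have "phi' x = 0 \<longleftrightarrow> x = P / 2" if "x \<in> {0<..<P}" for x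
    by (rule deriv_zero_iff_minimum_point[OF phi_deriv phi'_deriv sol abs_coeff_le[OF order_refl] phi_decr inc])
       (use that P_pos in auto)
  moreover have "phi' 0 = 0" "phi' P = 0"
    using phi_max phi_P by (auto intro!: DERIV_local_max[OF phi_deriv zero_less_one])
  moreover have "q (P - x) = q x" if "x \<in> {0..P}" for x using phi_sym[OF that] by (simp add: q_eq)
  ultimately show ?thesis using spectrum_with_one_node_zero_mode[OF _ sol] by blast
qed

end
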